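(* Let $\beta\in(0,1)$ and $1\le p<n/\beta$. Then the following statements are equivalent. 1. For all $f\in C_0^\infty(\mathbb{R}^n)$: $$\left(\int_0^\infty V(O_t(f))^{\frac{n-p\beta}{n}}\,d(t^p)\right)^{1/p}\lesssim\|f\|_{\dot{\Lambda}^{p,p}_\beta(\mathbb{R}^n)}.$$ 2. For all $f\in C_0^\infty(\mathbb{R}^n)$: $$\left(\int_{\mathbb{R}^n}|f(x)|^{\frac{np}{n-p\beta}}dx\right)^{\frac{n-p\beta}{np}}\lesssim\|f\|_{\dot{\Lambda}^{p,p}_\beta(\mathbb{R}^n)}.$$ 3. For all $f\in C_0^\infty(\mathbb{R}^n)$: $$\left(\int_{\mathbb{R}^n}\frac{|f(x)|^p}{|x|^{p\beta}}dx\right)^{1/p}\lesssim\|f\|_{\dot{\Lambda}^{p,p}_\beta(\mathbb{R}^n)}.$$ 4. For every bounded domain $O\subset\mathbb{R}^n$ with $C^\infty$ boundary: $$V(O)^{\frac{n-p\beta}{n}}\lesssim C^{p,p}_\beta(\overline{O}).$$ Moreover, all four inequalities hold.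
   Context: $C_0^\infty(\mathbb{R}^n)$ is the space of compactly supported smooth functions, $V$ is Lebesgue measure on $\mathbb{R}^n$, $O_t(f)=\{x:|f(x)|>t\}$, and $1_E$ is the characteristic function of $E$. Implicit constants are independent of $f$ and $O$. Besov norm: let $k=1+\lfloor\beta\rfloor$, $\Delta^1_h f(x)=f(x+h)-f(x)$ and $\Delta^k_h=\Delta^1_h\Delta^{k-1}_h$. Then $$\|f\|_{\dot{\Lambda}^{p,q}_\beta(\mathbb{R}^n)}=\left(\int_{\mathbb{R}^n}\|\Delta^k_h f\|_{L^p}^q|h|^{-(n+\beta q)}dh\right)^{1/q}.$$ Besov capacity: for compact $K$, $$C^{p,q}_\beta(K)=\inf\{\|f\|^p_{\dot{\Lambda}^{p,q}_\beta}: f\in C_0^\infty(\mathbb{R}^n),\ f\ge 1_K\}.$$ For arbitrary $E$, $$C^{p,q}_\beta(E)=\inf_{O\supseteq E\text{ open}}\sup_{K\subseteq O\text{ compact}}C^{p,q}_\beta(K).$$ *)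

theory Defs
  imports "HOL-Analysis.Analysis"
begin

text \<open>Real power of an extended nonnegative real, for positive exponents
  (infinity stays infinity).\<close>
definition ennpow :: "ennreal \<Rightarrow> real \<Rightarrow> ennreal" where
  "ennpow x a = (if x = \<infinity> then \<infinity> else ennreal (enn2real x powr a))"

fun Ck :: "nat \<Rightarrow> ('a::euclidean_space \<Rightarrow> real) \<Rightarrow> bool" where
  "Ck 0 f = continuous_on UNIV f"
| "Ck (Suc k) f = ((\<forall>x. f differentiable (at x)) \<and>
      (\<forall>v. Ck k (\<lambda>x. frechet_derivative f (at x) v)))"

definition smooth :: "('a::euclidean_space \<Rightarrow> real) \<Rightarrow> bool" where
  "smooth f = (\<forall>k. Ck k f)"

definition C0inf :: "('a::euclidean_space \<Rightarrow> real) set" where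
  "C0inf = {f. smooth f \<and> compact (closure {x. f x \<noteq> 0})}"

fun fdiff :: "nat \<Rightarrow> 'a::euclidean_space \<Rightarrow> ('a \<Rightarrow> real) \<Rightarrow> 'a \<Rightarrow> real" where
  "fdiff 0 h f = f"
| "fdiff (Suc k) h f = (\<lambda>x. fdiff k h f (x + h) - fdiff k h f x)"

definition Lp_norm :: "real \<Rightarrow> ('a::euclidean_space \<Rightarrow> real) \<Rightarrow> ennreal" where
  "Lp_norm p g = ennpow (\<integral>\<^sup>+ x. ennreal (\<bar>g x\<bar> powr p) \<partial>lborel) (1 / p)"

definition besov_norm :: "real \<Rightarrow> real \<Rightarrow> real \<Rightarrow> ('a::euclidean_space \<Rightarrow> real) \<Rightarrow> ennreal" where
  "besov_norm p q \<beta> f = ennpow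
     (\<integral>\<^sup>+ h. ennpow (Lp_norm p (fdiff (nat (1 + \<lfloor>\<beta>\<rfloor>)) h f)) q
               * ennreal (norm h powr (- (real DIM('a) + \<beta> * q))) \<partial>lborel) (1 / q)"

definition besov_cap_compact :: "real \<Rightarrow> real \<Rightarrow> real \<Rightarrow> 'a::euclidean_space set \<Rightarrow> ennreal" where
  "besov_cap_compact p q \<beta> K =
     (INF f \<in> {f \<in> C0inf. \<forall>x. indicator K x \<le> f x}. ennpow (besov_norm p q \<beta> f) p)"

definition besov_cap :: "real \<Rightarrow> real \<Rightarrow> real \<Rightarrow> 'a::euclidean_space set \<Rightarrow> ennreal" where
  "besov_cap p q \<beta> E =
     (INF W \<in> {W. open W \<and> E \<subseteq> W}. SUP K \<in> {K. compact K \<and> K \<subseteq> W}. besov_cap_compact p q \<beta> K)"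

definition smooth_bounded_domain :: "'a::euclidean_space set \<Rightarrow> bool" where
  "smooth_bounded_domain D =
     (D \<noteq> {} \<and> open D \<and> connected D \<and> bounded D \<and>
      (\<forall>x \<in> frontier D. \<exists>U \<rho>. open U \<and> x \<in> U \<and> smooth \<rho> \<and>
          D \<inter> U = {y \<in> U. \<rho> y < 0} \<and>
          (\<forall>y \<in> U. \<rho> y = 0 \<longrightarrow> frechet_derivative \<rho> (at y) \<noteq> (\<lambda>v. 0))))"

definition Ot :: "real \<Rightarrow> ('a \<Rightarrow> real) \<Rightarrow> 'a set" where
  "Ot t f = {x. \<bar>f x\<bar> > t}"

end

theory Submission
  imports Defs
begin

(* Maz'ya's truncation method. Let M bound |f| and cut |f| into the layers
   min (max (|f| - t) 0) t at the dyadic levels t = M / 2^j. The layers of a number add up to a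
   1-Lipschitz function of it, so the Gagliardo energies of the layers of f sum to at most the
   energy of f. The layer at level t equals t on O_2t(f) and vanishes off O_t(f); since the kernel
   |h|^(-n-beta p) integrated over the complement of a set of measure a is at least a constant times
   a^(-beta p/n), the energy of that layer dominates t^p |O_2t(f)| |O_t(f)|^(-beta p/n). A discrete
   absorption argument turns these bounds into
     sum_j (M/2^j)^p |O_(M/2^j)(f)|^((n - beta p)/n) <= C ||f||^p,
   which is inequality 1 after splitting (0, infinity) into dyadic intervals. Inequalities 2 and 3
   follow by summing over the same level sets, using that an l^1 sum dominates the l^(n/(n - beta p))
   sum and that the integral of |x|^(-beta p) over E is at most C |E|^((n - beta p)/n). Inequality 4
   is inequality 1 for a test function that is at least 1 on the set. As all four inequalities hold,
   they are equivalent. *)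

section \<open>Extended nonnegative reals\<close>

lemma ennpow_ennreal: "0 \<le> x \<Longrightarrow> ennpow (ennreal x) a = ennreal (x powr a)"
  by (simp add: ennpow_def)

lemma ennpow_mono:
  assumes "x \<le> y" "0 < a"
  shows "ennpow x a \<le> ennpow y a"
proof (cases "y = \<infinity>")
  case False
  then have "x \<noteq> \<infinity>" using assms(1) by (auto simp: top_unique)
  moreover have "enn2real x \<le> enn2real y" using assms(1) False by (simp add: enn2real_mono less_top)
  ultimately show ?thesis
    using False assms(2) by (simp add: ennpow_def ennreal_leI powr_mono2)
qed (simp add: ennpow_def)

lemma ennpow_ennpow: "ennpow (ennpow x a) b = ennpow x (a * b)"
  by (simp add: ennpow_def powr_powr)

lemma ennpow_one: "ennpow x 1 = x"
  by (cases x) (simp_all add: ennpow_def)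

lemma ennpow_inverse: "0 < p \<Longrightarrow> ennpow (ennpow x (1 / p)) p = x"
  by (simp add: ennpow_ennpow ennpow_one)

lemma ennpow_mult:
  assumes "0 \<le> c"
  shows "ennpow (ennreal c * x) a = ennreal (c powr a) * ennpow x a"
proof (cases x)
  case (real r)
  then have "ennpow (ennreal c * x) a = ennreal ((c * r) powr a)"
    using assms by (simp add: ennreal_mult[symmetric] ennpow_ennreal)
  then show ?thesis
    using real assms by (simp add: ennpow_ennreal powr_mult ennreal_mult)
next
  case top
  then show ?thesis
    using assms by (cases "c = 0") (simp_all add: ennreal_mult_top ennpow_def)
qed

lemma ennpow_le_mult:
  assumes "x \<le> ennreal c * y" "0 \<le> c" "0 < a"
  shows "ennpow x a \<le> ennreal (c powr a) * ennpow y a"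
  using ennpow_mono[OF assms(1,3)] by (simp add: ennpow_mult assms(2))

lemma sum_powr_le_powr_sum:
  fixes x :: "'i \<Rightarrow> real"
  assumes "finite I" "\<And>i. i \<in> I \<Longrightarrow> 0 \<le> x i" "1 \<le> r"
  shows "(\<Sum>i\<in>I. x i powr r) \<le> (\<Sum>i\<in>I. x i) powr r"
proof -
  define S where "S = (\<Sum>i\<in>I. x i)"
  have "S \<ge> 0" unfolding S_def using assms by (simp add: sum_nonneg)
  have "x i powr r \<le> x i * S powr (r - 1)" if "i \<in> I" for i
  proof (cases "x i = 0")
    case False
    then have "x i > 0" using assms that by force
    moreover have "x i \<le> S" unfolding S_def using assms that by (intro member_le_sum) auto
    ultimately have "x i * x i powr (r - 1) \<le> x i * S powr (r - 1)"
      using assms by (intro mult_left_mono powr_mono2) auto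
    then show ?thesis using \<open>x i > 0\<close> by (simp add: powr_diff)
  qed simp
  then have "(\<Sum>i\<in>I. x i powr r) \<le> (\<Sum>i\<in>I. x i * S powr (r - 1))" by (intro sum_mono)
  also have "\<dots> = S * S powr (r - 1)" unfolding S_def by (simp add: sum_distrib_right)
  also have "\<dots> = S powr r"
    using \<open>S \<ge> 0\<close> assms(3) by (cases "S = 0") (simp_all add: powr_diff)
  finally show ?thesis unfolding S_def .
qed

lemma suminf_ennpow_le:
  fixes x :: "nat \<Rightarrow> ennreal"
  assumes "1 \<le> r"
  shows "(\<Sum>j. ennpow (x j) r) \<le> ennpow (\<Sum>j. x j) r"
proof (cases "(\<Sum>j. x j) = \<infinity>")
  case False
  have fin: "x j \<noteq> \<infinity>" for j
    using False ennreal_suminf_lessD[of x \<infinity> j] by (auto simp: less_top)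
  have "(\<Sum>j<N. ennpow (x j) r) \<le> ennpow (\<Sum>j. x j) r" for N
  proof -
    have "(\<Sum>j<N. ennpow (x j) r) = ennreal (\<Sum>j<N. enn2real (x j) powr r)"
      using fin by (simp add: ennpow_def sum_ennreal)
    also have "\<dots> \<le> ennreal ((\<Sum>j<N. enn2real (x j)) powr r)"
      using assms by (intro ennreal_leI sum_powr_le_powr_sum) auto
    also have "\<dots> = ennpow (\<Sum>j<N. x j) r"
      using fin by (simp add: ennpow_def enn2real_sum less_top)
    also have "\<dots> \<le> ennpow (\<Sum>j. x j) r"
      using assms by (intro ennpow_mono sum_le_suminf) (auto intro: summableI)
    finally show ?thesis .
  qed
  then show ?thesis by (simp add: suminf_eq_SUP SUP_least)
qed (simp add: ennpow_def)

lemma ennreal_le_suminf: "f j \<le> (\<Sum>i. f i :: ennreal)"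
  using sum_le_suminf[of f "{j}"] by (simp add: summableI)

lemma ennreal_le_mult_INF:
  assumes "0 < c" "\<And>i. i \<in> A \<Longrightarrow> y \<le> ennreal c * f i"
  shows "y \<le> ennreal c * (INF i\<in>A. f i)"
proof -
  have cancel: "ennreal (1 / c) * (ennreal c * z) = z" "ennreal c * (ennreal (1 / c) * z) = z" for z
    using assms(1) by (simp_all add: mult.assoc[symmetric] ennreal_mult[symmetric])
  have "ennreal (1 / c) * y \<le> f i" if "i \<in> A" for i
    using mult_left_mono[OF assms(2)[OF that] zero_le, of "ennreal (1 / c)"] by (simp only: cancel)
  then have "ennreal c * (ennreal (1 / c) * y) \<le> ennreal c * (INF i\<in>A. f i)"
    by (intro mult_left_mono INF_greatest) auto
  then show ?thesis by (simp only: cancel)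
qed

section \<open>Dyadic bookkeeping\<close>

lemma dyadic_shell:
  fixes t M :: real
  assumes "0 < t" "t \<le> 2 * M"
  obtains j where "M / 2 ^ j < t" "t \<le> 2 * (M / 2 ^ j)"
proof (cases "M < t")
  case True
  then show ?thesis using that[of 0] assms by simp
next
  case False
  obtain n :: nat where "M / t < 2 ^ n" using real_arch_pow[of 2 "M / t"] by auto
  then have "M / 2 ^ n < t" using assms(1) by (simp add: field_simps)
  then obtain k where "\<not> M / 2 ^ k < t" "M / 2 ^ Suc k < t"
    using ex_least_nat_less[of "\<lambda>n. M / 2 ^ n < t" n] False by auto
  then show ?thesis using that[of "Suc k"] by simp
qed

lemma dyadic_powr_Suc:
  fixes M p :: real
  assumes "0 \<le> M"
  shows "(M / 2 ^ j) powr p = 2 powr p * (M / 2 ^ Suc j) powr p"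
  using powr_mult[of 2 "M / 2 ^ Suc j" p] assms by simp

lemma powr_one_minus_le_dichotomy:
  fixes a b \<delta> \<sigma> :: real
  assumes "0 \<le> b" "b \<le> a" "0 < \<delta>" "0 < \<sigma>" "\<sigma> < 1"
  shows "b powr (1 - \<sigma>) \<le> \<delta> powr - \<sigma> * b * a powr - \<sigma> + \<delta> powr (1 - \<sigma>) * a powr (1 - \<sigma>)"
proof (cases "\<delta> * a \<le> b")
  case True
  show ?thesis
  proof (cases "b = 0")
    case False
    then have "0 < b" "0 < a" using assms True by (auto simp: zero_less_mult_iff)
    then have "b powr (1 - \<sigma>) = b * b powr - \<sigma>" by (simp add: powr_diff powr_minus divide_inverse)
    also have "\<dots> \<le> b * (\<delta> * a) powr - \<sigma>"
      using True \<open>0 < b\<close> \<open>0 < a\<close> assms by (intro mult_left_mono powr_mono2') auto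
    also have "\<dots> = \<delta> powr - \<sigma> * b * a powr - \<sigma>"
      using \<open>0 < a\<close> assms by (simp add: powr_mult)
    finally show ?thesis by (simp add: add_increasing2)
  qed (use assms in simp)
next
  case False
  then have "b powr (1 - \<sigma>) \<le> (\<delta> * a) powr (1 - \<sigma>)"
    using assms by (intro powr_mono2) auto
  also have "\<dots> = \<delta> powr (1 - \<sigma>) * a powr (1 - \<sigma>)"
    using assms by (simp add: powr_mult)
  finally show ?thesis using assms by (simp add: add_increasing)
qed

lemma sum_le_twice_sum_add_last:
  fixes P S :: "nat \<Rightarrow> real"
  assumes step: "\<And>j. P j \<le> S j + P (Suc j) / 2" and nonneg: "\<And>j. 0 \<le> P j"
  shows "(\<Sum>j<N. P j) \<le> 2 * (\<Sum>j<N. S j) + P N"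
proof -
  have "(\<Sum>j<N. P j) \<le> (\<Sum>j<N. S j) + (\<Sum>j<N. P (Suc j)) / 2"
    using sum_mono[of "{..<N}" P "\<lambda>j. S j + P (Suc j) / 2"] step
    by (simp add: sum.distrib sum_divide_distrib)
  moreover have "(\<Sum>j<N. P (Suc j)) \<le> (\<Sum>j<N. P j) + P N"
    using sum.lessThan_Suc_shift[of P N] nonneg[of 0] by simp
  ultimately show ?thesis by linarith
qed

lemma suminf_le_of_partial_sums_le:
  fixes P e :: "nat \<Rightarrow> real"
  assumes partial: "\<And>N. (\<Sum>j<N. P j) \<le> B + e N" and "e \<longlonglongrightarrow> 0" and nonneg: "\<And>j. 0 \<le> P j"
  shows "(\<Sum>j. ennreal (P j)) \<le> ennreal B"
proof -
  have "(\<Sum>j<N. P j) \<le> B" for N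
  proof (rule LIMSEQ_le_const)
    show "(\<lambda>N'. B + e N') \<longlonglongrightarrow> B" using tendsto_add[OF tendsto_const \<open>e \<longlonglongrightarrow> 0\<close>] by simp
    have "(\<Sum>j<N. P j) \<le> B + e N'" if "N \<le> N'" for N'
      using sum_mono2[of "{..<N'}" "{..<N}" P] that nonneg partial[of N'] by force
    then show "\<exists>N0. \<forall>N'\<ge>N0. (\<Sum>j<N. P j) \<le> B + e N'" by blast
  qed
  then show ?thesis
    using nonneg by (simp add: suminf_eq_SUP SUP_least ennreal_leI)
qed

section \<open>Truncations and the Gagliardo energy\<close>

definition truncation :: "real \<Rightarrow> real \<Rightarrow> real" where
  "truncation t s = min (max (s - t) 0) t"

lemma truncation_mono: "s \<le> s' \<Longrightarrow> truncation t s \<le> truncation t s'"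
  by (auto simp: truncation_def)

lemma sum_truncation_dyadic:
  assumes "0 < M"
  shows "(\<Sum>j<N. truncation (M / 2 ^ j) s) = min (max s (2 * M / 2 ^ N)) (2 * M) - 2 * M / 2 ^ N"
proof (induction N)
  case (Suc N)
  define a where "a = M / 2 ^ N"
  have "0 < a" "a \<le> M" unfolding a_def using assms by (auto simp: field_simps)
  moreover have "2 * M / 2 ^ N = 2 * a" "2 * M / 2 ^ Suc N = a" unfolding a_def by simp_all
  ultimately show ?case
    using Suc by (simp add: a_def[symmetric] truncation_def)
qed simp

lemma sum_abs_truncation_diff_le:
  assumes "0 < M"
  shows "(\<Sum>j<N. \<bar>truncation (M / 2 ^ j) a - truncation (M / 2 ^ j) b\<bar>) \<le> \<bar>a - b\<bar>"
proof -
  have ordered: "(\<Sum>j<N. \<bar>truncation (M / 2 ^ j) a - truncation (M / 2 ^ j) b\<bar>) \<le> \<bar>a - b\<bar>"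
    if "b \<le> a" for a b
  proof -
    have "(\<Sum>j<N. \<bar>truncation (M / 2 ^ j) a - truncation (M / 2 ^ j) b\<bar>)
        = (\<Sum>j<N. truncation (M / 2 ^ j) a) - (\<Sum>j<N. truncation (M / 2 ^ j) b)"
      using truncation_mono[OF that] by (simp add: sum_subtractf[symmetric])
    also have "\<dots> \<le> \<bar>a - b\<bar>"
      using that by (simp add: sum_truncation_dyadic[OF assms])
    finally show ?thesis .
  qed
  show ?thesis
    using ordered[of b a] ordered[of a b] by (cases "b \<le> a") (simp_all add: abs_minus_commute)
qed

lemma sum_powr_truncation_diff_le:
  assumes "0 < M" "1 \<le> p"
  shows "(\<Sum>j<N. \<bar>truncation (M / 2 ^ j) a - truncation (M / 2 ^ j) b\<bar> powr p) \<le> \<bar>a - b\<bar> powr p"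
proof -
  have "(\<Sum>j<N. \<bar>truncation (M / 2 ^ j) a - truncation (M / 2 ^ j) b\<bar> powr p)
      \<le> (\<Sum>j<N. \<bar>truncation (M / 2 ^ j) a - truncation (M / 2 ^ j) b\<bar>) powr p"
    using assms(2) by (intro sum_powr_le_powr_sum) auto
  also have "\<dots> \<le> \<bar>a - b\<bar> powr p"
    using assms by (intro powr_mono2 sum_abs_truncation_diff_le) (auto intro: sum_nonneg)
  finally show ?thesis .
qed

definition gagliardo :: "real \<Rightarrow> real \<Rightarrow> ('a::euclidean_space \<Rightarrow> real) \<Rightarrow> ennreal" where
  "gagliardo p \<beta> f = (\<integral>\<^sup>+ h. (\<integral>\<^sup>+ x. ennreal (\<bar>f (x + h) - f x\<bar> powr p) \<partial>lborel)
        * ennreal (norm h powr (- (real DIM('a) + \<beta> * p))) \<partial>lborel)"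

lemma besov_norm_eq_gagliardo:
  assumes "0 \<le> \<beta>" "\<beta> < 1" "0 < p"
  shows "besov_norm p p \<beta> f = ennpow (gagliardo p \<beta> f) (1 / p)"
proof -
  have "\<lfloor>\<beta>\<rfloor> = 0" using assms by (simp add: floor_eq_iff)
  then show ?thesis
    unfolding besov_norm_def gagliardo_def Lp_norm_def using assms(3) by (simp add: ennpow_inverse)
qed

lemma suminf_gagliardo_truncation_le:
  fixes f :: "'a::euclidean_space \<Rightarrow> real"
  assumes [measurable]: "f \<in> borel_measurable borel" and "1 \<le> p" "0 < M"
  shows "(\<Sum>j. gagliardo p \<beta> (\<lambda>x. truncation (M / 2 ^ j) \<bar>f x\<bar>)) \<le> gagliardo p \<beta> f"
proof -
  define w where "w h = ennreal (norm h powr (- (real DIM('a) + \<beta> * p)))" for h :: 'a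
  define d where "d j x h = ennreal (\<bar>truncation (M / 2 ^ j) \<bar>f (x + h)\<bar> - truncation (M / 2 ^ j) \<bar>f x\<bar>\<bar> powr p)"
    for j x h
  have [measurable]: "(\<lambda>x. d j x h) \<in> borel_measurable borel" for j h
    unfolding d_def truncation_def by measurable
  have [measurable]: "(\<lambda>h. (\<integral>\<^sup>+ x. d j x h \<partial>lborel) * w h) \<in> borel_measurable borel" for j
    unfolding d_def w_def truncation_def by measurable
  have pointwise: "(\<Sum>j<N. d j x h) \<le> ennreal (\<bar>f (x + h) - f x\<bar> powr p)" for N x h
  proof -
    have "(\<Sum>j<N. d j x h) \<le> ennreal (\<bar>\<bar>f (x + h)\<bar> - \<bar>f x\<bar>\<bar> powr p)"
      unfolding d_def using assms by (simp add: ennreal_leI sum_powr_truncation_diff_le)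
    also have "\<dots> \<le> ennreal (\<bar>f (x + h) - f x\<bar> powr p)"
      using assms by (intro ennreal_leI powr_mono2) (auto simp: abs_triangle_ineq3)
    finally show ?thesis .
  qed
  have "(\<Sum>j<N. gagliardo p \<beta> (\<lambda>x. truncation (M / 2 ^ j) \<bar>f x\<bar>)) \<le> gagliardo p \<beta> f" for N
  proof -
    have "gagliardo p \<beta> (\<lambda>x. truncation (M / 2 ^ j) \<bar>f x\<bar>) = (\<integral>\<^sup>+ h. (\<integral>\<^sup>+ x. d j x h \<partial>lborel) * w h \<partial>lborel)"
      for j unfolding gagliardo_def d_def w_def by simp
    then have "(\<Sum>j<N. gagliardo p \<beta> (\<lambda>x. truncation (M / 2 ^ j) \<bar>f x\<bar>))
        = (\<integral>\<^sup>+ h. (\<Sum>j<N. (\<integral>\<^sup>+ x. d j x h \<partial>lborel) * w h) \<partial>lborel)"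
      by (simp add: nn_integral_sum)
    also have "\<dots> = (\<integral>\<^sup>+ h. (\<integral>\<^sup>+ x. (\<Sum>j<N. d j x h) \<partial>lborel) * w h \<partial>lborel)"
      by (intro nn_integral_cong) (simp add: sum_distrib_right nn_integral_sum)
    also have "\<dots> \<le> gagliardo p \<beta> f"
      unfolding gagliardo_def w_def by (intro nn_integral_mono mult_right_mono pointwise) simp_all
    finally show ?thesis .
  qed
  then show ?thesis by (simp add: suminf_eq_SUP SUP_least)
qed

section \<open>Integrals of negative powers of the norm\<close>

lemma nn_integral_powr_norm_outside_ge_ball:
  fixes G :: "'a::euclidean_space set"
  defines "n \<equiv> real DIM('a)"
  assumes s: "0 < s" and "0 < r" and G: "G \<in> fmeasurable lborel"
  shows "ennreal (r powr - (n + s) * (measure lborel (ball (0::'a) r) - measure lborel G))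
    \<le> (\<integral>\<^sup>+ h. indicator (- G) h * ennreal (norm h powr - (n + s)) \<partial>lborel)"
proof -
  define D where "D = ball (0::'a) r - G - {0}"
  have G_sets: "G \<in> sets lborel" using G by (rule fmeasurableD)
  have ball: "ball (0::'a) r \<in> fmeasurable lborel"
    by (intro fmeasurableI emeasure_lborel_ball_finite) simp
  have D: "D \<in> fmeasurable lborel"
    unfolding D_def using G_sets by (intro fmeasurableI2[OF ball]) auto
  have "measure lborel D = measure lborel (ball (0::'a) r - (ball 0 r \<inter> G))"
    unfolding D_def using G_sets by (subst measure_Diff_null_set) (auto simp: Diff_Int)
  also have "\<dots> = measure lborel (ball (0::'a) r) - measure lborel (ball 0 r \<inter> G)"
    using G_sets emeasure_lborel_ball_finite[of "0::'a" r] by (intro measure_Diff) auto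
  finally have "measure lborel D = measure lborel (ball (0::'a) r) - measure lborel (ball 0 r \<inter> G)" .
  moreover have "measure lborel (ball (0::'a) r \<inter> G) \<le> measure lborel G"
    using G by (intro measure_mono_fmeasurable) auto
  ultimately have "measure lborel (ball (0::'a) r) - measure lborel G \<le> measure lborel D"
    by linarith
  then have "ennreal (r powr - (n + s) * (measure lborel (ball (0::'a) r) - measure lborel G))
      \<le> ennreal (r powr - (n + s)) * emeasure lborel D"
    using D by (simp add: emeasure_eq_measure2 ennreal_mult'[symmetric] ennreal_leI mult_left_mono)
  also have "\<dots> = (\<integral>\<^sup>+ h. ennreal (r powr - (n + s)) * indicator D h \<partial>lborel)"
    using D by (intro nn_integral_cmult_indicator[symmetric]) (rule fmeasurableD)
  also have "\<dots> \<le> (\<integral>\<^sup>+ h. indicator (- G) h * ennreal (norm h powr - (n + s)) \<partial>lborel)"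
  proof (intro nn_integral_mono)
    fix h
    show "ennreal (r powr - (n + s)) * indicator D h \<le> indicator (- G) h * ennreal (norm h powr - (n + s))"
    proof (cases "h \<in> D")
      case True
      then have "r powr - (n + s) \<le> norm h powr - (n + s)"
        unfolding D_def n_def using s by (intro powr_mono2') auto
      then show ?thesis using True by (auto simp: D_def ennreal_leI)
    qed simp
  qed
  finally show ?thesis .
qed

lemma nn_integral_powr_norm_outside_ge:
  fixes G :: "'a::euclidean_space set"
  defines "n \<equiv> real DIM('a)"
  assumes s: "0 < s" and G: "G \<in> fmeasurable lborel" "0 < measure lborel G"
  shows "ennreal ((unit_ball_vol n / 2) powr (1 + s / n) * measure lborel G powr (- s / n))
    \<le> (\<integral>\<^sup>+ h. indicator (- G) h * ennreal (norm h powr - (n + s)) \<partial>lborel)"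
proof -
  define v where "v = measure lborel G"
  define \<omega> where "\<omega> = unit_ball_vol n"
  have "0 < \<omega>" "0 < n" "0 < v" unfolding \<omega>_def n_def v_def using G by simp_all
  define r where "r = (2 * v / \<omega>) powr (1 / n)"
  have "0 < r" unfolding r_def using \<open>0 < v\<close> \<open>0 < \<omega>\<close> by simp
  have v: "v = \<omega> / 2 * r powr n"
    unfolding r_def using \<open>0 < v\<close> \<open>0 < \<omega>\<close> \<open>0 < n\<close> by (simp add: powr_powr)
  then have "measure lborel (ball (0::'a) r) - v = v"
    using \<open>0 < r\<close> by (simp add: content_ball powr_realpow \<omega>_def n_def)
  then have "ennreal (r powr - (n + s) * v) \<le> (\<integral>\<^sup>+ h. indicator (- G) h * ennreal (norm h powr - (n + s)) \<partial>lborel)"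
    using nn_integral_powr_norm_outside_ge_ball[OF s \<open>0 < r\<close> G(1)] by (simp add: n_def v_def)
  also have "r powr - (n + s) * v = (\<omega> / 2) powr (1 + s / n) * v powr (- s / n)"
  proof -
    have "0 \<le> \<omega> / 2" "0 \<le> r powr n" using \<open>0 < \<omega>\<close> by simp_all
    have "r powr - (n + s) * v = \<omega> / 2 * r powr (- s)"
      by (subst v) (simp add: powr_add[symmetric])
    also have "\<dots> = ((\<omega> / 2) powr (1 + s / n) * (\<omega> / 2) powr (- s / n)) * r powr (- s)"
      using \<open>0 < \<omega>\<close> by (simp add: powr_add[symmetric])
    also have "\<dots> = (\<omega> / 2) powr (1 + s / n) * ((\<omega> / 2) powr (- s / n) * r powr (- s))"
      by (simp only: mult.assoc)
    also have "r powr (- s) = (r powr n) powr (- s / n)"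
      using \<open>0 < n\<close> by (simp add: powr_powr)
    also have "(\<omega> / 2) powr (- s / n) * (r powr n) powr (- s / n) = v powr (- s / n)"
      using \<open>0 \<le> \<omega> / 2\<close> \<open>0 \<le> r powr n\<close> by (simp only: v powr_mult)
    finally show ?thesis .
  qed
  finally show ?thesis unfolding \<omega>_def v_def .
qed

lemma indicator_ball_powr_norm_le_suminf:
  fixes r s :: real and x :: "'a::euclidean_space"
  assumes "0 < s" "0 < r"
  shows "indicator (ball 0 r) x * ennreal (norm x powr - s)
    \<le> (\<Sum>j. ennreal ((r / 2 ^ j / 2) powr - s) * indicator (cball 0 (r / 2 ^ j)) x)"
proof (cases "x \<in> ball 0 r \<and> x \<noteq> 0")
  case True
  then obtain j where j: "r / 2 / 2 ^ j < norm x" "norm x \<le> 2 * (r / 2 / 2 ^ j)"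
    using dyadic_shell[of "norm x" "r / 2"] by auto
  then have "norm x powr - s \<le> (r / 2 ^ j / 2) powr - s"
    using assms by (intro powr_mono2') auto
  then have "indicator (ball 0 r) x * ennreal (norm x powr - s)
      \<le> ennreal ((r / 2 ^ j / 2) powr - s) * indicator (cball 0 (r / 2 ^ j)) x"
    using True j by (simp add: ennreal_leI)
  also have "\<dots> \<le> (\<Sum>j. ennreal ((r / 2 ^ j / 2) powr - s) * indicator (cball 0 (r / 2 ^ j)) x)"
    by (rule ennreal_le_suminf)
  finally show ?thesis .
qed (auto simp: indicator_def)

lemma nn_integral_ball_powr_norm_le:
  fixes r s :: real
  defines "n \<equiv> real DIM('a::euclidean_space)"
  assumes s: "0 < s" "s < n" and r: "0 < r"
  shows "(\<integral>\<^sup>+ x. indicator (ball (0::'a) r) x * ennreal (norm x powr - s) \<partial>lborel)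
    \<le> ennreal (unit_ball_vol n * 2 powr s / (1 - 2 powr (s - n)) * r powr (n - s))"
proof -
  define \<omega> where "\<omega> = unit_ball_vol n"
  define q :: real where "q = 2 powr (s - n)"
  have "0 < \<omega>" unfolding \<omega>_def n_def by simp
  have "0 < q" "q < 1" unfolding q_def using s by (auto intro: powr_less_one)
  define c where "c j = ennreal ((r / 2 ^ j / 2) powr - s)" for j :: nat
  have pointwise: "indicator (ball (0::'a) r) x * ennreal (norm x powr - s)
      \<le> (\<Sum>j. c j * indicator (cball (0::'a) (r / 2 ^ j)) x)" for x
    unfolding c_def using s(1) r by (rule indicator_ball_powr_norm_le_suminf)
  have summand: "c j * emeasure lborel (cball (0::'a) (r / 2 ^ j)) = ennreal (\<omega> * 2 powr s * r powr (n - s) * q ^ j)"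
    for j
  proof -
    define \<rho> where "\<rho> = r / 2 ^ j"
    have "0 < \<rho>" unfolding \<rho>_def using r by simp
    have "c j * emeasure lborel (cball (0::'a) (r / 2 ^ j)) = ennreal ((\<rho> / 2) powr - s) * ennreal (\<omega> * \<rho> ^ DIM('a))"
      unfolding c_def \<rho>_def[symmetric] using \<open>0 < \<rho>\<close> by (simp add: emeasure_cball \<omega>_def n_def)
    also have "\<dots> = ennreal ((\<rho> / 2) powr - s * (\<omega> * \<rho> ^ DIM('a)))"
      using \<open>0 < \<rho>\<close> \<open>0 < \<omega>\<close> by (simp add: ennreal_mult)
    also have "(\<rho> / 2) powr - s * (\<omega> * \<rho> ^ DIM('a)) = \<omega> * 2 powr s * \<rho> powr (n - s)"
      using \<open>0 < \<rho>\<close> by (simp add: n_def powr_realpow[symmetric] powr_divide powr_diff powr_minus_divide field_simps)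
    also have "\<rho> powr (n - s) = r powr (n - s) * q ^ j"
      unfolding \<rho>_def q_def using r
      by (simp add: powr_divide powr_realpow[symmetric] powr_powr powr_minus_divide[symmetric] powr_add[symmetric] field_simps
          flip: powr_minus)
    finally show ?thesis by (simp only: mult.assoc)
  qed
  have "(\<integral>\<^sup>+ x. indicator (ball (0::'a) r) x * ennreal (norm x powr - s) \<partial>lborel)
      \<le> (\<integral>\<^sup>+ x. (\<Sum>j. c j * indicator (cball (0::'a) (r / 2 ^ j)) x) \<partial>lborel)"
    by (intro nn_integral_mono pointwise)
  also have "\<dots> = (\<Sum>j. c j * emeasure lborel (cball (0::'a) (r / 2 ^ j)))"
  proof -
    have "(\<lambda>x. c j * indicator (cball (0::'a) (r / 2 ^ j)) x) \<in> borel_measurable lborel" for j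
      by (intro borel_measurable_times_ennreal borel_measurable_const borel_measurable_indicator) simp
    then show ?thesis by (simp add: nn_integral_suminf nn_integral_cmult_indicator)
  qed
  also have "\<dots> = ennreal (\<omega> * 2 powr s * r powr (n - s) * (1 / (1 - q)))"
    unfolding summand using \<open>0 < q\<close> \<open>q < 1\<close> \<open>0 < \<omega>\<close>
    by (intro suminf_ennreal_eq sums_mult geometric_sums) auto
  finally show ?thesis by (simp add: \<omega>_def q_def)
qed

lemma nn_integral_powr_norm_le_ball_split:
  fixes E :: "'a::euclidean_space set"
  defines "n \<equiv> real DIM('a)"
  assumes s: "0 < s" "s < n" and E: "E \<in> sets lborel" and "0 < r"
  shows "(\<integral>\<^sup>+ x. ennreal (norm x powr - s) * indicator E x \<partial>lborel)
    \<le> ennreal (unit_ball_vol n * 2 powr s / (1 - 2 powr (s - n)) * r powr (n - s))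
      + ennreal (r powr - s) * emeasure lborel E"
proof -
  have pointwise: "ennreal (norm x powr - s) * indicator E x
      \<le> indicator (ball (0::'a) r) x * ennreal (norm x powr - s) + ennreal (r powr - s) * indicator E x" for x
  proof (cases "x \<in> E \<and> r \<le> norm x")
    case True
    then have "norm x powr - s \<le> r powr - s" using \<open>0 < r\<close> s by (intro powr_mono2') auto
    then show ?thesis using True by (simp add: ennreal_leI)
  qed (auto simp: indicator_def)
  have "(\<lambda>x. indicator (ball (0::'a) r) x * ennreal (norm x powr - s)) \<in> borel_measurable borel"
    by (intro borel_measurable_times_ennreal borel_measurable_indicator) auto
  then have "(\<integral>\<^sup>+ x. ennreal (norm x powr - s) * indicator E x \<partial>lborel)
      \<le> (\<integral>\<^sup>+ x. indicator (ball (0::'a) r) x * ennreal (norm x powr - s) \<partial>lborel)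
        + (\<integral>\<^sup>+ x. ennreal (r powr - s) * indicator E x \<partial>lborel)"
    using E by (subst nn_integral_add[symmetric]) (auto intro!: nn_integral_mono pointwise)
  then show ?thesis
    using nn_integral_ball_powr_norm_le[OF s[unfolded n_def] \<open>0 < r\<close>] E
    by (simp add: n_def nn_integral_cmult_indicator add_right_mono order_trans)
qed

lemma nn_integral_powr_norm_le_measure:
  defines "n \<equiv> real DIM('a::euclidean_space)"
  assumes s: "0 < s" "s < n"
  obtains C where "0 < C"
    "\<And>E :: 'a set. E \<in> fmeasurable lborel \<Longrightarrow>
       (\<integral>\<^sup>+ x. ennreal (norm x powr - s) * indicator E x \<partial>lborel) \<le> ennreal (C * measure lborel E powr (1 - s / n))"
proof
  define \<omega> where "\<omega> = unit_ball_vol n"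
  define K where "K = 2 powr s / (1 - 2 powr (s - n)) + 1"
  have "0 < \<omega>" "0 < n" unfolding \<omega>_def n_def by simp_all
  moreover have q: "2 powr (s - n) < (1::real)" using s by (intro powr_less_one) auto
  ultimately have "0 < K" unfolding K_def by (simp add: add_pos_pos)
  then show "0 < \<omega> powr (s / n) * K" using \<open>0 < \<omega>\<close> by simp
  fix E :: "'a set" assume E: "E \<in> fmeasurable lborel"
  define v where "v = measure lborel E"
  have E_sets: "E \<in> sets lborel" using E by (rule fmeasurableD)
  show "(\<integral>\<^sup>+ x. ennreal (norm x powr - s) * indicator E x \<partial>lborel) \<le> ennreal (\<omega> powr (s / n) * K * v powr (1 - s / n))"
  proof (cases "v = 0")
    case True
    then have "E \<in> null_sets lborel"
      using E E_sets by (simp add: v_def null_sets_def emeasure_eq_measure2)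
    then show ?thesis by (simp add: nn_integral_null_set)
  next
    case False
    then have "0 < v" using measure_nonneg[of lborel E] unfolding v_def by linarith
    define r where "r = (v / \<omega>) powr (1 / n)"
    have "0 < r" unfolding r_def using \<open>0 < v\<close> \<open>0 < \<omega>\<close> by simp
    have v: "v = \<omega> * r powr n"
      unfolding r_def using \<open>0 < v\<close> \<open>0 < \<omega>\<close> \<open>0 < n\<close> by (simp add: powr_powr)
    have "(\<integral>\<^sup>+ x. ennreal (norm x powr - s) * indicator E x \<partial>lborel)
        \<le> ennreal (\<omega> * 2 powr s / (1 - 2 powr (s - n)) * r powr (n - s)) + ennreal (r powr - s * v)"
      using nn_integral_powr_norm_le_ball_split[OF s[unfolded n_def] E_sets \<open>0 < r\<close>] E \<open>0 < v\<close>
      by (simp add: \<omega>_def n_def v_def emeasure_eq_measure2 ennreal_mult)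
    also have "\<dots> = ennreal (\<omega> * r powr (n - s) * K)"
    proof -
      have "r powr - s * v = \<omega> * r powr (n - s)"
        by (subst v) (simp add: powr_add[symmetric])
      then have "\<omega> * 2 powr s / (1 - 2 powr (s - n)) * r powr (n - s) + r powr - s * v = \<omega> * r powr (n - s) * K"
        unfolding K_def using q by (simp add: field_simps)
      moreover have "0 \<le> \<omega> * 2 powr s / (1 - 2 powr (s - n)) * r powr (n - s)" "0 \<le> r powr - s * v"
        using \<open>0 < \<omega>\<close> \<open>0 < v\<close> q by simp_all
      ultimately show ?thesis by (metis ennreal_plus)
    qed
    also have "\<omega> * r powr (n - s) = \<omega> powr (s / n) * v powr (1 - s / n)"
    proof -
      have "v powr (1 - s / n) = \<omega> powr (1 - s / n) * r powr (n - s)"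
        using \<open>0 < \<omega>\<close> \<open>0 < r\<close> \<open>0 < n\<close> by (subst v) (simp add: powr_mult powr_powr algebra_simps)
      then show ?thesis using \<open>0 < \<omega>\<close> by (simp add: powr_add[symmetric] mult.assoc[symmetric])
    qed
    finally show ?thesis by (simp add: ac_simps)
  qed
qed

section \<open>Level sets\<close>

lemma sets_Ot [measurable]: "f \<in> borel_measurable borel \<Longrightarrow> Ot t f \<in> sets borel"
  unfolding Ot_def by measurable

lemma Ot_fmeasurable:
  assumes "f \<in> borel_measurable borel" "{x. f x \<noteq> 0} \<in> fmeasurable lborel" "0 \<le> t"
  shows "Ot t f \<in> fmeasurable lborel"
  using assms by (intro fmeasurableI2[OF assms(2)]) (auto simp: Ot_def)

lemma measure_Ot_antimono:
  assumes "f \<in> borel_measurable borel" "{x. f x \<noteq> 0} \<in> fmeasurable lborel" "0 \<le> s" "s \<le> t"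
  shows "measure lborel (Ot t f) \<le> measure lborel (Ot s f)"
  using assms by (intro measure_mono_fmeasurable Ot_fmeasurable) (auto simp: Ot_def)

lemma measure_Ot_le_support:
  assumes "f \<in> borel_measurable borel" "{x. f x \<noteq> 0} \<in> fmeasurable lborel" "0 \<le> t"
  shows "measure lborel (Ot t f) \<le> measure lborel {x. f x \<noteq> 0}"
  using assms by (intro measure_mono_fmeasurable) (auto simp: Ot_def)

lemma fmeasurable_translate:
  fixes A :: "'a::euclidean_space set"
  assumes "A \<in> fmeasurable lborel"
  shows "{h. x + h \<in> A} \<in> fmeasurable lborel" "measure lborel {h. x + h \<in> A} = measure lborel A"
proof -
  have "A \<in> sets borel" using assms by (simp add: fmeasurable_def)
  then have "emeasure lborel {h. x + h \<in> A} = emeasure (distr lborel borel ((+) x)) A"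
    by (subst emeasure_distr) (auto simp: vimage_def)
  then have "emeasure lborel {h. x + h \<in> A} = emeasure lborel A" by (simp add: lborel_distr_plus)
  moreover have "{h. x + h \<in> A} \<in> sets lborel" using \<open>A \<in> sets borel\<close> by measurable
  ultimately show "{h. x + h \<in> A} \<in> fmeasurable lborel" "measure lborel {h. x + h \<in> A} = measure lborel A"
    using assms by (auto simp: fmeasurable_def measure_def)
qed

lemma gagliardo_ge_jump:
  fixes g :: "'a::euclidean_space \<Rightarrow> real" and A B :: "'a set"
  assumes [measurable]: "g \<in> borel_measurable borel" "A \<in> sets borel" "B \<in> sets borel"
    and "0 < p" and on_A: "\<And>x. x \<in> A \<Longrightarrow> g x = t" and off_B: "\<And>x. x \<notin> B \<Longrightarrow> g x = 0"
  shows "(\<integral>\<^sup>+ x. indicator A x * (\<integral>\<^sup>+ h. indicator (- B) (x + h)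
      * ennreal (\<bar>t\<bar> powr p * norm h powr - (real DIM('a) + \<beta> * p)) \<partial>lborel) \<partial>lborel)
    \<le> gagliardo p \<beta> g"
proof -
  define w where "w h = ennreal (norm h powr - (real DIM('a) + \<beta> * p))" for h :: 'a
  define H where "H x h = indicator A x * (indicator (- B) (x + h) * ennreal (\<bar>t\<bar> powr p)) * w h" for x h :: 'a
  have "case_prod H \<in> borel_measurable (lborel \<Otimes>\<^sub>M lborel)" unfolding H_def w_def by measurable
  note Fubini = lborel_pair.Fubini'[OF this]
  have H_le: "H x h \<le> ennreal (\<bar>g (x + h) - g x\<bar> powr p) * w h" for x h
    unfolding H_def using on_A off_B by (auto simp: indicator_def intro: mult_right_mono)
  have "(\<integral>\<^sup>+ x. indicator A x * (\<integral>\<^sup>+ h. indicator (- B) (x + h)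
      * ennreal (\<bar>t\<bar> powr p * norm h powr - (real DIM('a) + \<beta> * p)) \<partial>lborel) \<partial>lborel)
      = (\<integral>\<^sup>+ x. (\<integral>\<^sup>+ h. H x h \<partial>lborel) \<partial>lborel)"
    unfolding H_def w_def
    by (intro nn_integral_cong) (simp add: nn_integral_cmult[symmetric] ennreal_mult' ac_simps)
  also have "\<dots> = (\<integral>\<^sup>+ h. (\<integral>\<^sup>+ x. H x h \<partial>lborel) \<partial>lborel)" by (rule Fubini[symmetric])
  also have "\<dots> \<le> (\<integral>\<^sup>+ h. (\<integral>\<^sup>+ x. ennreal (\<bar>g (x + h) - g x\<bar> powr p) \<partial>lborel) * w h \<partial>lborel)"
  proof (intro nn_integral_mono)
    fix h
    have "(\<integral>\<^sup>+ x. H x h \<partial>lborel) \<le> (\<integral>\<^sup>+ x. ennreal (\<bar>g (x + h) - g x\<bar> powr p) * w h \<partial>lborel)"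
      by (intro nn_integral_mono H_le)
    also have "\<dots> = (\<integral>\<^sup>+ x. ennreal (\<bar>g (x + h) - g x\<bar> powr p) \<partial>lborel) * w h"
      by (rule nn_integral_multc) measurable
    finally show "(\<integral>\<^sup>+ x. H x h \<partial>lborel) \<le> (\<integral>\<^sup>+ x. ennreal (\<bar>g (x + h) - g x\<bar> powr p) \<partial>lborel) * w h" .
  qed
  also have "\<dots> = gagliardo p \<beta> g"
    unfolding gagliardo_def w_def ..
  finally show ?thesis .
qed

lemma gagliardo_truncation_ge:
  fixes f :: "'a::euclidean_space \<Rightarrow> real"
  defines "n \<equiv> real DIM('a)"
  assumes f [measurable]: "f \<in> borel_measurable borel"
    and p: "0 < p" and \<beta>: "0 < \<beta>" and t: "0 < t" and fin: "Ot t f \<in> fmeasurable lborel"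
  shows "ennreal ((unit_ball_vol n / 2) powr (1 + \<beta> * p / n) * t powr p
      * measure lborel (Ot (2 * t) f) * measure lborel (Ot t f) powr (- \<beta> * p / n))
    \<le> gagliardo p \<beta> (\<lambda>x. truncation t \<bar>f x\<bar>)"
proof (cases "measure lborel (Ot t f) = 0")
  case True
  have "measure lborel (Ot (2 * t) f) \<le> measure lborel (Ot t f)"
    using t fin by (intro measure_mono_fmeasurable) (auto simp: Ot_def)
  then show ?thesis using True by simp
next
  case False
  define a where "a = measure lborel (Ot t f)"
  have "0 < a" using False measure_nonneg[of lborel "Ot t f"] unfolding a_def by linarith
  define c where "c = t powr p * ((unit_ball_vol n / 2) powr (1 + \<beta> * p / n) * a powr (- \<beta> * p / n))"
  have inner: "ennreal c \<le> (\<integral>\<^sup>+ h. indicator (- Ot t f) (x + h)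
      * ennreal (\<bar>t\<bar> powr p * norm h powr - (n + \<beta> * p)) \<partial>lborel)" for x
  proof -
    define G where "G = {h. x + h \<in> Ot t f}"
    have "G \<in> fmeasurable lborel" "measure lborel G = a"
      unfolding G_def a_def using fin by (rule fmeasurable_translate)+
    then have "ennreal ((unit_ball_vol n / 2) powr (1 + \<beta> * p / n) * a powr (- \<beta> * p / n))
        \<le> (\<integral>\<^sup>+ h. indicator (- G) h * ennreal (norm h powr - (n + \<beta> * p)) \<partial>lborel)"
      using nn_integral_powr_norm_outside_ge[of "\<beta> * p" G] \<open>0 < a\<close> p \<beta> unfolding n_def by simp
    then have "ennreal (t powr p) * ennreal ((unit_ball_vol n / 2) powr (1 + \<beta> * p / n) * a powr (- \<beta> * p / n))
        \<le> ennreal (t powr p) * (\<integral>\<^sup>+ h. indicator (- G) h * ennreal (norm h powr - (n + \<beta> * p)) \<partial>lborel)"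
      by (rule mult_left_mono) simp
    also have "\<dots> = (\<integral>\<^sup>+ h. indicator (- Ot t f) (x + h) * ennreal (\<bar>t\<bar> powr p * norm h powr - (n + \<beta> * p)) \<partial>lborel)"
      using t by (subst nn_integral_cmult[symmetric]) (auto simp: G_def ennreal_mult' indicator_def intro!: nn_integral_cong)
    finally show ?thesis unfolding c_def by (simp add: ennreal_mult')
  qed
  have "ennreal c * emeasure lborel (Ot (2 * t) f) = (\<integral>\<^sup>+ x. indicator (Ot (2 * t) f) x * ennreal c \<partial>lborel)"
    by (subst nn_integral_cmult_indicator[symmetric]) (simp_all add: ac_simps)
  also have "\<dots> \<le> (\<integral>\<^sup>+ x. indicator (Ot (2 * t) f) x * (\<integral>\<^sup>+ h. indicator (- Ot t f) (x + h)
      * ennreal (\<bar>t\<bar> powr p * norm h powr - (n + \<beta> * p)) \<partial>lborel) \<partial>lborel)"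
    by (intro nn_integral_mono mult_left_mono inner) simp
  also have "\<dots> \<le> gagliardo p \<beta> (\<lambda>x. truncation t \<bar>f x\<bar>)"
  proof -
    have [measurable]: "(\<lambda>x. truncation t \<bar>f x\<bar>) \<in> borel_measurable borel"
      unfolding truncation_def by measurable
    show ?thesis
      unfolding n_def by (rule gagliardo_ge_jump) (use t p in \<open>auto simp: truncation_def Ot_def\<close>)
  qed
  also have "emeasure lborel (Ot (2 * t) f) = ennreal (measure lborel (Ot (2 * t) f))"
    using fin t by (intro emeasure_eq_measure2 fmeasurableI2[OF fin]) (auto simp: Ot_def)
  finally show ?thesis
    unfolding c_def a_def by (simp add: ennreal_mult''[symmetric] ac_simps)
qed

lemma sum_level_ratio_le_gagliardo:
  fixes p \<beta> :: real
  defines "n \<equiv> real DIM('a::euclidean_space)"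
  assumes p: "1 \<le> p" and \<beta>: "0 < \<beta>"
  obtains c where "0 < c"
    "\<And>(f :: 'a \<Rightarrow> real) M N. f \<in> borel_measurable borel \<Longrightarrow> {x. f x \<noteq> 0} \<in> fmeasurable lborel \<Longrightarrow>
      0 < M \<Longrightarrow> ennreal (c * (\<Sum>j<N. (M / 2 ^ j) powr p * measure lborel (Ot (M / 2 ^ j) f)
         * measure lborel (Ot (M / 2 ^ Suc j) f) powr (- \<beta> * p / n))) \<le> gagliardo p \<beta> f"
proof
  define c0 where "c0 = (unit_ball_vol n / 2) powr (1 + \<beta> * p / n)"
  have "0 < unit_ball_vol n / 2" unfolding n_def by simp
  then have "0 < c0" unfolding c0_def by simp
  then show "0 < c0 / 2 powr p" by simp
  fix f :: "'a \<Rightarrow> real" and M :: real and N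
  assume f: "f \<in> borel_measurable borel" and fin: "{x. f x \<noteq> 0} \<in> fmeasurable lborel" and "0 < M"
  define t where "t j = M / 2 ^ Suc j" for j
  have "0 < t j" for j unfolding t_def using \<open>0 < M\<close> by simp
  have summand: "ennreal (c0 / 2 powr p * ((M / 2 ^ j) powr p * measure lborel (Ot (M / 2 ^ j) f)
      * measure lborel (Ot (M / 2 ^ Suc j) f) powr (- \<beta> * p / n)))
      \<le> gagliardo p \<beta> (\<lambda>x. truncation (M / 2 / 2 ^ j) \<bar>f x\<bar>)" for j
  proof -
    have "ennreal (c0 * t j powr p * measure lborel (Ot (2 * t j) f) * measure lborel (Ot (t j) f) powr (- \<beta> * p / n))
        \<le> gagliardo p \<beta> (\<lambda>x. truncation (t j) \<bar>f x\<bar>)"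
      unfolding c0_def n_def using p \<open>0 < t j\<close>
      by (intro gagliardo_truncation_ge[OF f _ \<beta> \<open>0 < t j\<close> Ot_fmeasurable[OF f fin]]) simp_all
    moreover have "c0 / 2 powr p * ((2 * t j) powr p * X * Y) = c0 * t j powr p * X * Y" for X Y
      using \<open>0 < t j\<close> by (simp add: powr_mult)
    moreover have "M / 2 ^ j = 2 * t j" "M / 2 ^ Suc j = t j" "M / 2 / 2 ^ j = t j"
      unfolding t_def by simp_all
    ultimately show ?thesis by (simp only:)
  qed
  have "ennreal (c0 / 2 powr p * (\<Sum>j<N. (M / 2 ^ j) powr p * measure lborel (Ot (M / 2 ^ j) f)
      * measure lborel (Ot (M / 2 ^ Suc j) f) powr (- \<beta> * p / n)))
      = (\<Sum>j<N. ennreal (c0 / 2 powr p * ((M / 2 ^ j) powr p * measure lborel (Ot (M / 2 ^ j) f)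
      * measure lborel (Ot (M / 2 ^ Suc j) f) powr (- \<beta> * p / n))))"
    using \<open>0 < c0\<close> \<open>0 < M\<close> by (simp add: sum_distrib_left)
  also have "\<dots> \<le> (\<Sum>j<N. gagliardo p \<beta> (\<lambda>x. truncation (M / 2 / 2 ^ j) \<bar>f x\<bar>))"
    by (intro sum_mono summand)
  also have "\<dots> \<le> (\<Sum>j. gagliardo p \<beta> (\<lambda>x. truncation (M / 2 / 2 ^ j) \<bar>f x\<bar>))"
    by (intro sum_le_suminf summableI) auto
  also have "\<dots> \<le> gagliardo p \<beta> f"
    using f p \<open>0 < M\<close> by (intro suminf_gagliardo_truncation_le) auto
  finally show "ennreal (c0 / 2 powr p * (\<Sum>j<N. (M / 2 ^ j) powr p * measure lborel (Ot (M / 2 ^ j) f)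
      * measure lborel (Ot (M / 2 ^ Suc j) f) powr (- \<beta> * p / n))) \<le> gagliardo p \<beta> f" .
qed

lemma dyadic_absorption:
  fixes a :: "nat \<Rightarrow> real" and M p \<sigma> B V :: real
  assumes "0 < M" "0 < p" "0 < \<sigma>" "\<sigma> < 1"
    and a: "\<And>j. 0 \<le> a j" "\<And>j. a j \<le> a (Suc j)" "\<And>j. a j \<le> V"
    and ratio: "\<And>N. (\<Sum>j<N. (M / 2 ^ j) powr p * a j * a (Suc j) powr - \<sigma>) \<le> B"
  shows "(\<Sum>j. ennreal ((M / 2 ^ j) powr p * a j powr (1 - \<sigma>)))
    \<le> ennreal (2 * 2 powr ((p + 1) * \<sigma> / (1 - \<sigma>)) * B)"
proof -
  define \<delta> :: real where "\<delta> = 2 powr (- (p + 1) / (1 - \<sigma>))"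
  have "0 < \<delta>" unfolding \<delta>_def by simp
  have \<delta>_small: "2 powr p * \<delta> powr (1 - \<sigma>) = 1 / 2"
    unfolding \<delta>_def using \<open>\<sigma> < 1\<close> by (simp add: powr_powr powr_add[symmetric] powr_minus_divide)
  have "- (p + 1) / (1 - \<sigma>) * - \<sigma> = (p + 1) * \<sigma> / (1 - \<sigma>)"
    using \<open>\<sigma> < 1\<close> by (simp add: field_simps)
  then have \<delta>_inv: "\<delta> powr - \<sigma> = 2 powr ((p + 1) * \<sigma> / (1 - \<sigma>))"
    unfolding \<delta>_def powr_powr by (rule arg_cong)
  define P where "P j = (M / 2 ^ j) powr p * a j powr (1 - \<sigma>)" for j
  define S where "S j = \<delta> powr - \<sigma> * ((M / 2 ^ j) powr p * a j * a (Suc j) powr - \<sigma>)" for j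
  \<comment> \<open>Either \<open>a j \<ge> \<delta> * a (Suc j)\<close> and the term is controlled by the ratio term, or the level set
    grows by more than the factor \<open>1 / \<delta>\<close> and the term is absorbed by half of the next one.\<close>
  have step: "P j \<le> S j + P (Suc j) / 2" for j
  proof -
    have "P j \<le> (M / 2 ^ j) powr p * (\<delta> powr - \<sigma> * a j * a (Suc j) powr - \<sigma>
        + \<delta> powr (1 - \<sigma>) * a (Suc j) powr (1 - \<sigma>))"
      unfolding P_def using a \<open>0 < \<delta>\<close> \<open>0 < \<sigma>\<close> \<open>\<sigma> < 1\<close>
      by (intro mult_left_mono powr_one_minus_le_dichotomy) auto
    also have "\<dots> = S j + (2 powr p * \<delta> powr (1 - \<sigma>)) * P (Suc j)"
      unfolding S_def P_def dyadic_powr_Suc[OF less_imp_le[OF \<open>0 < M\<close>], of j p] by (simp add: algebra_simps)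
    finally show ?thesis unfolding \<delta>_small by simp
  qed
  have absorbed: "(\<Sum>j<N. P j) \<le> 2 * (\<Sum>j<N. S j) + P N" for N
    using step by (rule sum_le_twice_sum_add_last) (simp add: P_def)
  have S_sum: "(\<Sum>j<N. S j) \<le> \<delta> powr - \<sigma> * B" for N
    unfolding S_def sum_distrib_left[symmetric] by (intro mult_left_mono ratio) simp
  have P_le: "P N \<le> M powr p * V powr (1 - \<sigma>) * (2 powr - p) ^ N" for N
  proof -
    have "P N \<le> (M / 2 ^ N) powr p * V powr (1 - \<sigma>)"
      unfolding P_def using a \<open>\<sigma> < 1\<close> by (intro mult_left_mono powr_mono2) auto
    also have "(M / 2 ^ N) powr p = M powr p * (2 powr - p) ^ N"
      using \<open>0 < M\<close> by (simp add: powr_divide powr_realpow[symmetric] powr_powr powr_minus_divide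
          flip: powr_power)
    finally show ?thesis by (simp add: ac_simps)
  qed
  have "(\<Sum>j<N. P j) \<le> 2 * \<delta> powr - \<sigma> * B + M powr p * V powr (1 - \<sigma>) * (2 powr - p) ^ N" for N
    using absorbed[of N] S_sum[of N] P_le[of N] by linarith
  moreover have "(\<lambda>N. M powr p * V powr (1 - \<sigma>) * (2 powr - p) ^ N) \<longlonglongrightarrow> 0"
    using \<open>0 < p\<close> by (intro tendsto_mult_right_zero LIMSEQ_power_zero) (auto intro: powr_less_one)
  moreover have "0 \<le> P j" for j unfolding P_def by simp
  ultimately have "(\<Sum>j. ennreal (P j)) \<le> ennreal (2 * \<delta> powr - \<sigma> * B)"
    by (rule suminf_le_of_partial_sums_le)
  then show ?thesis unfolding P_def \<delta>_inv .
qed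

lemma suminf_level_le_gagliardo:
  fixes p \<beta> :: real
  defines "n \<equiv> real DIM('a::euclidean_space)"
  assumes p: "1 \<le> p" and \<beta>: "0 < \<beta>" and \<beta>p: "\<beta> * p < n"
  obtains K where "0 < K"
    "\<And>(f :: 'a \<Rightarrow> real) M. f \<in> borel_measurable borel \<Longrightarrow> {x. f x \<noteq> 0} \<in> fmeasurable lborel \<Longrightarrow>
      0 < M \<Longrightarrow> (\<Sum>j. ennreal ((M / 2 ^ j) powr p * measure lborel (Ot (M / 2 ^ j) f) powr (1 - \<beta> * p / n)))
        \<le> ennreal K * gagliardo p \<beta> f"
proof -
  obtain c where "0 < c" and ratio: "\<And>(f :: 'a \<Rightarrow> real) M N. f \<in> borel_measurable borel \<Longrightarrow>
      {x. f x \<noteq> 0} \<in> fmeasurable lborel \<Longrightarrow> 0 < M \<Longrightarrow>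
      ennreal (c * (\<Sum>j<N. (M / 2 ^ j) powr p * measure lborel (Ot (M / 2 ^ j) f)
         * measure lborel (Ot (M / 2 ^ Suc j) f) powr (- \<beta> * p / n))) \<le> gagliardo p \<beta> f"
    using sum_level_ratio_le_gagliardo[OF p \<beta>] unfolding n_def by blast
  define \<sigma> where "\<sigma> = \<beta> * p / n"
  have "0 < \<sigma>" "\<sigma> < 1" unfolding \<sigma>_def n_def using p \<beta> \<beta>p by (auto simp: n_def)
  define K where "K = 2 * 2 powr ((p + 1) * \<sigma> / (1 - \<sigma>)) / c"
  show thesis
  proof (rule that)
    show "0 < K" unfolding K_def using \<open>0 < c\<close> by simp
    fix f :: "'a \<Rightarrow> real" and M :: real
    assume f: "f \<in> borel_measurable borel" and fin: "{x. f x \<noteq> 0} \<in> fmeasurable lborel" and "0 < M"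
    define a where "a j = measure lborel (Ot (M / 2 ^ j) f)" for j
    show "(\<Sum>j. ennreal ((M / 2 ^ j) powr p * a j powr (1 - \<beta> * p / n))) \<le> ennreal K * gagliardo p \<beta> f"
    proof (cases "gagliardo p \<beta> f")
      case (real B)
      have "(\<Sum>j<N. (M / 2 ^ j) powr p * a j * a (Suc j) powr - \<sigma>) \<le> B / c" for N
      proof -
        have "ennreal (c * (\<Sum>j<N. (M / 2 ^ j) powr p * a j * a (Suc j) powr - \<sigma>)) \<le> ennreal B"
          using ratio[OF f fin \<open>0 < M\<close>, of N] real unfolding a_def \<sigma>_def by simp
        then show ?thesis
          using real \<open>0 < c\<close> by (simp add: ennreal_le_iff pos_le_divide_eq mult.commute)
      qed
      then have "(\<Sum>j. ennreal ((M / 2 ^ j) powr p * a j powr (1 - \<sigma>)))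
          \<le> ennreal (2 * 2 powr ((p + 1) * \<sigma> / (1 - \<sigma>)) * (B / c))"
        using \<open>0 < M\<close> p \<open>0 < \<sigma>\<close> \<open>\<sigma> < 1\<close> unfolding a_def
        by (intro dyadic_absorption[where V = "measure lborel {x. f x \<noteq> 0}"]
            measure_Ot_antimono[OF f fin] measure_Ot_le_support[OF f fin])
          (auto simp: field_simps)
      then show ?thesis
        using real \<open>0 < c\<close> unfolding \<sigma>_def K_def by (simp add: ennreal_mult[symmetric])
    qed (use \<open>0 < K\<close> in \<open>simp add: ennreal_mult_top\<close>)
  qed
qed

section \<open>The four inequalities\<close>

lemma dyadic_layer_le:
  fixes \<phi> :: "real \<Rightarrow> ennreal"
  assumes mono: "\<And>s t. 0 < s \<Longrightarrow> s \<le> t \<Longrightarrow> \<phi> s \<le> \<phi> t" and "\<phi> 0 = 0" and bound: "\<bar>f x\<bar> \<le> 2 * M"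
  shows "\<phi> \<bar>f x\<bar> \<le> (\<Sum>j. \<phi> (2 * (M / 2 ^ j)) * indicator (Ot (M / 2 ^ j) f) x)"
proof (cases "f x = 0")
  case False
  then obtain j where j: "M / 2 ^ j < \<bar>f x\<bar>" "\<bar>f x\<bar> \<le> 2 * (M / 2 ^ j)"
    using dyadic_shell[of "\<bar>f x\<bar>" M] bound by auto
  then have "\<phi> \<bar>f x\<bar> \<le> \<phi> (2 * (M / 2 ^ j)) * indicator (Ot (M / 2 ^ j) f) x"
    using False mono by (simp add: Ot_def)
  also have "\<dots> \<le> (\<Sum>j. \<phi> (2 * (M / 2 ^ j)) * indicator (Ot (M / 2 ^ j) f) x)"
    by (rule ennreal_le_suminf)
  finally show ?thesis .
qed (simp add: \<open>\<phi> 0 = 0\<close>)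

lemma emeasure_interval_measure_powr:
  fixes a b p :: real
  assumes "0 < p" "0 \<le> a" "a \<le> b"
  shows "emeasure (interval_measure (\<lambda>t. (max 0 t) powr p)) {a<..b} = ennreal (b powr p - a powr p)"
proof -
  have "continuous_on UNIV (\<lambda>t::real. (max 0 t) powr p)"
    using assms by (intro continuous_on_powr' continuous_intros) auto
  then have "continuous (at_right t) (\<lambda>t::real. (max 0 t) powr p)" for t
    by (simp add: continuous_on_eq_continuous_within continuous_at_imp_continuous_at_within)
  then show ?thesis
    using assms by (subst emeasure_interval_measure_Ioc) (auto intro: powr_mono2)
qed

lemma level_measure_le_dyadic_intervals:
  fixes f :: "'a::euclidean_space \<Rightarrow> real"
  assumes f: "f \<in> borel_measurable borel" and fin: "{x. f x \<noteq> 0} \<in> fmeasurable lborel"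
    and M: "\<And>x. \<bar>f x\<bar> \<le> 2 * M" and "0 < \<theta>"
  shows "indicator {0<..} t * ennpow (emeasure lborel (Ot t f)) \<theta>
    \<le> (\<Sum>j. ennreal (measure lborel (Ot (M / 2 ^ j) f) powr \<theta>) * indicator {M / 2 ^ j <.. 2 * (M / 2 ^ j)} t)"
proof (cases "0 < t \<and> t \<le> 2 * M")
  case True
  then obtain j where j: "M / 2 ^ j < t" "t \<le> 2 * (M / 2 ^ j)" by (auto elim: dyadic_shell)
  have "measure lborel (Ot t f) \<le> measure lborel (Ot (M / 2 ^ j) f)"
    using j True by (intro measure_Ot_antimono[OF f fin]) (auto simp: zero_le_mult_iff)
  then have "ennpow (emeasure lborel (Ot t f)) \<theta> \<le> ennreal (measure lborel (Ot (M / 2 ^ j) f) powr \<theta>)"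
    using True \<open>0 < \<theta>\<close> Ot_fmeasurable[OF f fin, of t]
    by (simp add: emeasure_eq_measure2 ennpow_ennreal ennreal_leI powr_mono2)
  then have "indicator {0<..} t * ennpow (emeasure lborel (Ot t f)) \<theta>
      \<le> ennreal (measure lborel (Ot (M / 2 ^ j) f) powr \<theta>) * indicator {M / 2 ^ j <.. 2 * (M / 2 ^ j)} t"
    using True j by simp
  also have "\<dots> \<le> (\<Sum>j. ennreal (measure lborel (Ot (M / 2 ^ j) f) powr \<theta>)
      * indicator {M / 2 ^ j <.. 2 * (M / 2 ^ j)} t)"
    by (rule ennreal_le_suminf)
  finally show ?thesis .
next
  case False
  moreover have "Ot t f = {}" if "2 * M < t"
  proof -
    have "\<not> t < \<bar>f x\<bar>" for x using that M[of x] by linarith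
    then show ?thesis by (simp add: Ot_def)
  qed
  ultimately show ?thesis by (auto simp: ennpow_def)
qed

lemma nn_integral_dyadic_intervals_le:
  fixes c :: "nat \<Rightarrow> real" and M p :: real
  assumes "0 < M" "0 < p" "\<And>j. 0 \<le> c j"
  shows "(\<integral>\<^sup>+ t. (\<Sum>j. ennreal (c j) * indicator {M / 2 ^ j <.. 2 * (M / 2 ^ j)} t)
      \<partial>interval_measure (\<lambda>t. (max 0 t) powr p))
    \<le> ennreal (2 powr p) * (\<Sum>j. ennreal ((M / 2 ^ j) powr p * c j))"
proof -
  let ?\<mu> = "interval_measure (\<lambda>t. (max 0 t) powr p)"
  have "(\<lambda>t. ennreal (c j) * indicator {M / 2 ^ j <.. 2 * (M / 2 ^ j)} t) \<in> borel_measurable ?\<mu>" for j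
    by (intro borel_measurable_times_ennreal borel_measurable_const borel_measurable_indicator) simp
  then have "(\<integral>\<^sup>+ t. (\<Sum>j. ennreal (c j) * indicator {M / 2 ^ j <.. 2 * (M / 2 ^ j)} t) \<partial>?\<mu>)
      = (\<Sum>j. ennreal (c j) * emeasure ?\<mu> {M / 2 ^ j <.. 2 * (M / 2 ^ j)})"
    by (simp add: nn_integral_suminf nn_integral_cmult_indicator)
  also have "\<dots> \<le> (\<Sum>j. ennreal (2 powr p) * ennreal ((M / 2 ^ j) powr p * c j))"
  proof (intro suminf_le allI summableI)
    fix j
    have "emeasure ?\<mu> {M / 2 ^ j <.. 2 * (M / 2 ^ j)} = ennreal ((2 * (M / 2 ^ j)) powr p - (M / 2 ^ j) powr p)"
      using assms by (intro emeasure_interval_measure_powr) (auto simp: field_simps)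
    also have "\<dots> \<le> ennreal (2 powr p * (M / 2 ^ j) powr p)"
      using \<open>0 < M\<close> powr_mult[of 2 "M / 2 ^ j" p] by (intro ennreal_leI) simp
    finally have "ennreal (c j) * emeasure ?\<mu> {M / 2 ^ j <.. 2 * (M / 2 ^ j)}
        \<le> ennreal (c j) * ennreal (2 powr p * (M / 2 ^ j) powr p)"
      by (rule mult_left_mono) simp
    then show "ennreal (c j) * emeasure ?\<mu> {M / 2 ^ j <.. 2 * (M / 2 ^ j)}
        \<le> ennreal (2 powr p) * ennreal ((M / 2 ^ j) powr p * c j)"
      using assms(3) by (simp add: ennreal_mult[symmetric] ac_simps)
  qed
  finally show ?thesis by simp
qed

lemma nn_integral_level_measure_le_gagliardo:
  fixes p \<beta> :: real
  defines "n \<equiv> real DIM('a::euclidean_space)"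
  assumes p: "1 \<le> p" and \<beta>: "0 < \<beta>" and \<beta>p: "\<beta> * p < n"
  obtains C where "0 < C"
    "\<And>f :: 'a \<Rightarrow> real. f \<in> borel_measurable borel \<Longrightarrow> {x. f x \<noteq> 0} \<in> fmeasurable lborel \<Longrightarrow>
      bounded (range f) \<Longrightarrow>
      (\<integral>\<^sup>+ t. indicator {0<..} t * ennpow (emeasure lborel (Ot t f)) ((n - p * \<beta>) / n)
         \<partial>interval_measure (\<lambda>t. (max 0 t) powr p)) \<le> ennreal C * gagliardo p \<beta> f"
proof -
  obtain K where "0 < K" and level: "\<And>(f :: 'a \<Rightarrow> real) M. f \<in> borel_measurable borel \<Longrightarrow>
      {x. f x \<noteq> 0} \<in> fmeasurable lborel \<Longrightarrow> 0 < M \<Longrightarrow>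
      (\<Sum>j. ennreal ((M / 2 ^ j) powr p * measure lborel (Ot (M / 2 ^ j) f) powr (1 - \<beta> * p / n)))
        \<le> ennreal K * gagliardo p \<beta> f"
    using suminf_level_le_gagliardo[OF p \<beta> \<beta>p[unfolded n_def]] unfolding n_def by blast
  have "0 < n" unfolding n_def by simp
  then have \<theta>: "(n - p * \<beta>) / n = 1 - \<beta> * p / n" "0 < 1 - \<beta> * p / n"
    using \<beta>p by (simp_all add: field_simps)
  show thesis
  proof (rule that)
    show "0 < 2 powr p * K" using \<open>0 < K\<close> by simp
    fix f :: "'a \<Rightarrow> real"
    assume f: "f \<in> borel_measurable borel" and fin: "{x. f x \<noteq> 0} \<in> fmeasurable lborel"
      and "bounded (range f)"
    then obtain M where "0 < M" and M: "\<And>x. \<bar>f x\<bar> \<le> M" by (auto simp: bounded_pos)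
    then have "\<bar>f x\<bar> \<le> 2 * M" for x using M[of x] by linarith
    have "(\<integral>\<^sup>+ t. indicator {0<..} t * ennpow (emeasure lborel (Ot t f)) (1 - \<beta> * p / n)
        \<partial>interval_measure (\<lambda>t. (max 0 t) powr p))
      \<le> (\<integral>\<^sup>+ t. (\<Sum>j. ennreal (measure lborel (Ot (M / 2 ^ j) f) powr (1 - \<beta> * p / n))
          * indicator {M / 2 ^ j <.. 2 * (M / 2 ^ j)} t) \<partial>interval_measure (\<lambda>t. (max 0 t) powr p))"
      using \<open>\<And>x. \<bar>f x\<bar> \<le> 2 * M\<close> \<theta>(2)
      by (intro nn_integral_mono level_measure_le_dyadic_intervals[OF f fin])
    also have "\<dots> \<le> ennreal (2 powr p) * (ennreal K * gagliardo p \<beta> f)"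
      using \<open>0 < M\<close> p level[OF f fin \<open>0 < M\<close>]
      by (intro order.trans[OF nn_integral_dyadic_intervals_le] mult_left_mono) auto
    finally show "(\<integral>\<^sup>+ t. indicator {0<..} t * ennpow (emeasure lborel (Ot t f)) ((n - p * \<beta>) / n)
        \<partial>interval_measure (\<lambda>t. (max 0 t) powr p)) \<le> ennreal (2 powr p * K) * gagliardo p \<beta> f"
      unfolding \<theta>(1) using \<open>0 < K\<close> by (simp add: ennreal_mult mult.assoc)
  qed
qed

lemma nn_integral_powr_weighted_le_levels:
  fixes f :: "'a::euclidean_space \<Rightarrow> real" and w :: "'a \<Rightarrow> ennreal"
  assumes [measurable]: "f \<in> borel_measurable borel" "w \<in> borel_measurable borel"
    and "0 < q" and M: "\<And>x. \<bar>f x\<bar> \<le> 2 * M"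
  shows "(\<integral>\<^sup>+ x. ennreal (\<bar>f x\<bar> powr q) * w x \<partial>lborel)
    \<le> ennreal (2 powr q) * (\<Sum>j. ennreal ((M / 2 ^ j) powr q) * (\<integral>\<^sup>+ x. w x * indicator (Ot (M / 2 ^ j) f) x \<partial>lborel))"
proof -
  have "0 \<le> M" using M[of 0] by linarith
  have "ennreal (\<bar>f x\<bar> powr q) * w x
      \<le> (\<Sum>j. ennreal ((2 * (M / 2 ^ j)) powr q) * indicator (Ot (M / 2 ^ j) f) x) * w x" for x
    using \<open>0 < q\<close> M by (intro mult_right_mono dyadic_layer_le) (auto intro: ennreal_leI powr_mono2)
  also have "\<dots> x = (\<Sum>j. ennreal ((2 * (M / 2 ^ j)) powr q) * (w x * indicator (Ot (M / 2 ^ j) f) x))" for x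
    by (subst ennreal_suminf_multc[symmetric], rule suminf_cong) (simp add: ac_simps)
  finally have "(\<integral>\<^sup>+ x. ennreal (\<bar>f x\<bar> powr q) * w x \<partial>lborel)
      \<le> (\<integral>\<^sup>+ x. (\<Sum>j. ennreal ((2 * (M / 2 ^ j)) powr q) * (w x * indicator (Ot (M / 2 ^ j) f) x)) \<partial>lborel)"
    by (intro nn_integral_mono)
  also have "\<dots> = (\<Sum>j. ennreal ((2 * (M / 2 ^ j)) powr q) * (\<integral>\<^sup>+ x. w x * indicator (Ot (M / 2 ^ j) f) x \<partial>lborel))"
    by (simp add: nn_integral_suminf nn_integral_cmult)
  also have "\<dots> = ennreal (2 powr q) * (\<Sum>j. ennreal ((M / 2 ^ j) powr q) * (\<integral>\<^sup>+ x. w x * indicator (Ot (M / 2 ^ j) f) x \<partial>lborel))"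
  proof (subst ennreal_suminf_cmult[symmetric], rule suminf_cong)
    fix j
    have "(2 * (M / 2 ^ j)) powr q = 2 powr q * (M / 2 ^ j) powr q"
      using powr_mult[of 2 "M / 2 ^ j" q] \<open>0 \<le> M\<close> by simp
    then show "ennreal ((2 * (M / 2 ^ j)) powr q) * (\<integral>\<^sup>+ x. w x * indicator (Ot (M / 2 ^ j) f) x \<partial>lborel)
        = ennreal (2 powr q) * (ennreal ((M / 2 ^ j) powr q) * (\<integral>\<^sup>+ x. w x * indicator (Ot (M / 2 ^ j) f) x \<partial>lborel))"
      by (simp add: ennreal_mult mult.assoc)
  qed
  finally show ?thesis .
qed

lemma ennpow_level_term:
  fixes l a p \<theta> :: real
  assumes "0 < \<theta>" "0 \<le> a" "0 \<le> l"
  shows "ennpow (ennreal (l powr p * a powr \<theta>)) (1 / \<theta>) = ennreal (l powr (p / \<theta>) * a)"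
  using assms by (simp add: ennpow_ennreal powr_mult powr_powr)

lemma nn_integral_sobolev_le_gagliardo:
  fixes p \<beta> :: real
  defines "n \<equiv> real DIM('a::euclidean_space)"
  assumes p: "1 \<le> p" and \<beta>: "0 < \<beta>" and \<beta>p: "\<beta> * p < n"
  obtains C where "0 < C"
    "\<And>f :: 'a \<Rightarrow> real. f \<in> borel_measurable borel \<Longrightarrow> {x. f x \<noteq> 0} \<in> fmeasurable lborel \<Longrightarrow>
      bounded (range f) \<Longrightarrow>
      (\<integral>\<^sup>+ x. ennreal (\<bar>f x\<bar> powr (n * p / (n - p * \<beta>))) \<partial>lborel)
        \<le> ennreal C * ennpow (gagliardo p \<beta> f) (n / (n - p * \<beta>))"
proof -
  obtain K where "0 < K" and level: "\<And>(f :: 'a \<Rightarrow> real) M. f \<in> borel_measurable borel \<Longrightarrow>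
      {x. f x \<noteq> 0} \<in> fmeasurable lborel \<Longrightarrow> 0 < M \<Longrightarrow>
      (\<Sum>j. ennreal ((M / 2 ^ j) powr p * measure lborel (Ot (M / 2 ^ j) f) powr (1 - \<beta> * p / n)))
        \<le> ennreal K * gagliardo p \<beta> f"
    using suminf_level_le_gagliardo[OF p \<beta> \<beta>p[unfolded n_def]] unfolding n_def by blast
  define \<theta> where "\<theta> = 1 - \<beta> * p / n"
  have "0 < n" unfolding n_def by simp
  have "0 < \<theta>" "\<theta> \<le> 1" unfolding \<theta>_def using \<beta>p \<beta> p \<open>0 < n\<close> by (simp_all add: field_simps)
  have q: "n * p / (n - p * \<beta>) = p / \<theta>" and inv_\<theta>: "n / (n - p * \<beta>) = 1 / \<theta>"
    unfolding \<theta>_def using \<open>0 < n\<close> \<beta>p by (simp_all add: field_simps)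
  show thesis
  proof (rule that)
    show "0 < 2 powr (p / \<theta>) * K powr (1 / \<theta>)" using \<open>0 < K\<close> by simp
    fix f :: "'a \<Rightarrow> real"
    assume f [measurable]: "f \<in> borel_measurable borel" and fin: "{x. f x \<noteq> 0} \<in> fmeasurable lborel"
      and "bounded (range f)"
    then obtain M where "0 < M" and M: "\<And>x. \<bar>f x\<bar> \<le> M" by (auto simp: bounded_pos)
    then have "\<bar>f x\<bar> \<le> 2 * M" for x using M[of x] by linarith
    define a where "a j = measure lborel (Ot (M / 2 ^ j) f)" for j
    have "(\<integral>\<^sup>+ x. ennreal (\<bar>f x\<bar> powr (p / \<theta>)) \<partial>lborel)
        \<le> ennreal (2 powr (p / \<theta>)) * (\<Sum>j. ennreal ((M / 2 ^ j) powr (p / \<theta>))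
          * (\<integral>\<^sup>+ x. 1 * indicator (Ot (M / 2 ^ j) f) x \<partial>lborel))"
      using nn_integral_powr_weighted_le_levels[OF f _ _ \<open>\<And>x. \<bar>f x\<bar> \<le> 2 * M\<close>, where w = "\<lambda>_. 1"] p \<open>0 < \<theta>\<close>
      by simp
    also have "\<dots> = ennreal (2 powr (p / \<theta>)) * (\<Sum>j. ennpow (ennreal ((M / 2 ^ j) powr p * a j powr \<theta>)) (1 / \<theta>))"
    proof (intro arg_cong[where f = "\<lambda>x. ennreal (2 powr (p / \<theta>)) * x"] suminf_cong)
      fix j
      have "(\<integral>\<^sup>+ x. 1 * indicator (Ot (M / 2 ^ j) f) x \<partial>lborel) = ennreal (a j)"
        unfolding a_def using Ot_fmeasurable[OF f fin] \<open>0 < M\<close> by (simp add: emeasure_eq_measure2)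
      then show "ennreal ((M / 2 ^ j) powr (p / \<theta>)) * (\<integral>\<^sup>+ x. 1 * indicator (Ot (M / 2 ^ j) f) x \<partial>lborel)
          = ennpow (ennreal ((M / 2 ^ j) powr p * a j powr \<theta>)) (1 / \<theta>)"
        using \<open>0 < \<theta>\<close> \<open>0 < M\<close> by (subst ennpow_level_term) (simp_all add: a_def ennreal_mult)
    qed
    also have "\<dots> \<le> ennreal (2 powr (p / \<theta>)) * ennpow (\<Sum>j. ennreal ((M / 2 ^ j) powr p * a j powr \<theta>)) (1 / \<theta>)"
      using \<open>0 < \<theta>\<close> \<open>\<theta> \<le> 1\<close> by (intro mult_left_mono suminf_ennpow_le) auto
    also have "\<dots> \<le> ennreal (2 powr (p / \<theta>)) * ennpow (ennreal K * gagliardo p \<beta> f) (1 / \<theta>)"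
      using level[OF f fin \<open>0 < M\<close>] \<open>0 < \<theta>\<close> unfolding a_def \<theta>_def
      by (intro mult_left_mono ennpow_mono) auto
    finally show "(\<integral>\<^sup>+ x. ennreal (\<bar>f x\<bar> powr (n * p / (n - p * \<beta>))) \<partial>lborel)
        \<le> ennreal (2 powr (p / \<theta>) * K powr (1 / \<theta>)) * ennpow (gagliardo p \<beta> f) (n / (n - p * \<beta>))"
      unfolding q inv_\<theta> using \<open>0 < K\<close> by (simp add: ennpow_mult ennreal_mult mult.assoc)
  qed
qed

lemma nn_integral_hardy_le_gagliardo:
  fixes p \<beta> :: real
  defines "n \<equiv> real DIM('a::euclidean_space)"
  assumes p: "1 \<le> p" and \<beta>: "0 < \<beta>" and \<beta>p: "\<beta> * p < n"
  obtains C where "0 < C"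
    "\<And>f :: 'a \<Rightarrow> real. f \<in> borel_measurable borel \<Longrightarrow> {x. f x \<noteq> 0} \<in> fmeasurable lborel \<Longrightarrow>
      bounded (range f) \<Longrightarrow>
      (\<integral>\<^sup>+ x. ennreal (\<bar>f x\<bar> powr p / norm x powr (p * \<beta>)) \<partial>lborel) \<le> ennreal C * gagliardo p \<beta> f"
proof -
  obtain K where "0 < K" and level: "\<And>(f :: 'a \<Rightarrow> real) M. f \<in> borel_measurable borel \<Longrightarrow>
      {x. f x \<noteq> 0} \<in> fmeasurable lborel \<Longrightarrow> 0 < M \<Longrightarrow>
      (\<Sum>j. ennreal ((M / 2 ^ j) powr p * measure lborel (Ot (M / 2 ^ j) f) powr (1 - \<beta> * p / n)))
        \<le> ennreal K * gagliardo p \<beta> f"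
    using suminf_level_le_gagliardo[OF p \<beta> \<beta>p[unfolded n_def]] unfolding n_def by blast
  have "0 < \<beta> * p" using p \<beta> by simp
  obtain R where "0 < R" and riesz: "\<And>E :: 'a set. E \<in> fmeasurable lborel \<Longrightarrow>
      (\<integral>\<^sup>+ x. ennreal (norm x powr - (\<beta> * p)) * indicator E x \<partial>lborel)
        \<le> ennreal (R * measure lborel E powr (1 - \<beta> * p / n))"
    using nn_integral_powr_norm_le_measure[OF \<open>0 < \<beta> * p\<close> \<beta>p[unfolded n_def]] unfolding n_def by blast
  show thesis
  proof (rule that)
    show "0 < 2 powr p * R * K" using \<open>0 < R\<close> \<open>0 < K\<close> by simp
    fix f :: "'a \<Rightarrow> real"
    assume f [measurable]: "f \<in> borel_measurable borel" and fin: "{x. f x \<noteq> 0} \<in> fmeasurable lborel"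
      and "bounded (range f)"
    then obtain M where "0 < M" and M: "\<And>x. \<bar>f x\<bar> \<le> M" by (auto simp: bounded_pos)
    then have "\<bar>f x\<bar> \<le> 2 * M" for x using M[of x] by linarith
    have "\<bar>f x\<bar> powr p / norm x powr (p * \<beta>) = \<bar>f x\<bar> powr p * norm x powr - (\<beta> * p)" for x
      by (simp add: powr_minus_divide mult.commute)
    then have "(\<integral>\<^sup>+ x. ennreal (\<bar>f x\<bar> powr p / norm x powr (p * \<beta>)) \<partial>lborel)
        = (\<integral>\<^sup>+ x. ennreal (\<bar>f x\<bar> powr p) * ennreal (norm x powr - (\<beta> * p)) \<partial>lborel)"
      by (simp add: ennreal_mult')
    also have "\<dots> \<le> ennreal (2 powr p) * (\<Sum>j. ennreal ((M / 2 ^ j) powr p)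
        * (\<integral>\<^sup>+ x. ennreal (norm x powr - (\<beta> * p)) * indicator (Ot (M / 2 ^ j) f) x \<partial>lborel))"
      using p by (intro nn_integral_powr_weighted_le_levels[OF f] \<open>\<And>x. \<bar>f x\<bar> \<le> 2 * M\<close>) auto
    also have "\<dots> \<le> ennreal (2 powr p) * (\<Sum>j. ennreal ((M / 2 ^ j) powr p)
        * ennreal (R * measure lborel (Ot (M / 2 ^ j) f) powr (1 - \<beta> * p / n)))"
      using \<open>0 < M\<close> by (intro mult_left_mono suminf_le allI summableI riesz Ot_fmeasurable[OF f fin]) auto
    also have "\<dots> = ennreal (2 powr p * R)
        * (\<Sum>j. ennreal ((M / 2 ^ j) powr p * measure lborel (Ot (M / 2 ^ j) f) powr (1 - \<beta> * p / n)))"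
      using \<open>0 < R\<close> by (simp add: ennreal_mult[symmetric] ac_simps flip: ennreal_suminf_cmult)
    also have "\<dots> \<le> ennreal (2 powr p * R) * (ennreal K * gagliardo p \<beta> f)"
      using level[OF f fin \<open>0 < M\<close>] by (simp add: mult_left_mono)
    finally show "(\<integral>\<^sup>+ x. ennreal (\<bar>f x\<bar> powr p / norm x powr (p * \<beta>)) \<partial>lborel)
        \<le> ennreal (2 powr p * R * K) * gagliardo p \<beta> f"
      using \<open>0 < R\<close> \<open>0 < K\<close> by (simp add: ennreal_mult mult.assoc)
  qed
qed

lemma C0inf_continuous: "f \<in> C0inf \<Longrightarrow> continuous_on UNIV f"
  by (auto simp: C0inf_def smooth_def dest: spec[of _ 0])

lemma C0inf_borel_measurable: "f \<in> C0inf \<Longrightarrow> f \<in> borel_measurable borel"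
  by (intro borel_measurable_continuous_onI C0inf_continuous)

lemma C0inf_bounded:
  assumes "f \<in> C0inf"
  shows "bounded (range f)"
proof -
  have "compact (f ` closure {x. f x \<noteq> 0})"
    using assms by (intro compact_continuous_image continuous_on_subset[OF C0inf_continuous]) (auto simp: C0inf_def)
  then have "bounded (insert 0 (f ` closure {x. f x \<noteq> 0}))" by (simp add: compact_imp_bounded)
  moreover have "range f \<subseteq> insert 0 (f ` closure {x. f x \<noteq> 0})" using closure_subset by fastforce
  ultimately show ?thesis by (rule bounded_subset)
qed

lemma C0inf_support_fmeasurable:
  fixes f :: "'a::euclidean_space \<Rightarrow> real"
  assumes "f \<in> C0inf"
  shows "{x. f x \<noteq> 0} \<in> fmeasurable lborel"
proof (rule fmeasurableI2)
  show "closure {x. f x \<noteq> 0} \<in> fmeasurable lborel"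
    using assms by (intro fmeasurableI emeasure_compact_finite) (auto simp: C0inf_def)
  have [measurable]: "f \<in> borel_measurable borel" using assms by (rule C0inf_borel_measurable)
  show "{x. f x \<noteq> 0} \<in> sets lborel" by measurable
qed (rule closure_subset)

lemma nn_integral_level_measure_ge_volume:
  fixes f :: "'a::euclidean_space \<Rightarrow> real"
  assumes f: "f \<in> borel_measurable borel" and above: "\<And>x. x \<in> E \<Longrightarrow> 1 \<le> f x" and "0 < \<theta>" "0 < p"
  shows "ennpow (emeasure lborel E) \<theta> * ennreal (2 powr - p)
    \<le> (\<integral>\<^sup>+ t. indicator {0<..} t * ennpow (emeasure lborel (Ot t f)) \<theta> \<partial>interval_measure (\<lambda>t. (max 0 t) powr p))"
proof -
  let ?\<mu> = "interval_measure (\<lambda>t. (max 0 t) powr p)"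
  have "emeasure ?\<mu> {0<..1/2} = ennreal ((1/2) powr p - 0 powr p)"
    using \<open>0 < p\<close> by (intro emeasure_interval_measure_powr) auto
  also have "(1/2) powr p - 0 powr p = 2 powr - p" using \<open>0 < p\<close> by (simp add: powr_divide powr_minus_divide)
  finally have "ennpow (emeasure lborel E) \<theta> * ennreal (2 powr - p)
      = (\<integral>\<^sup>+ t. ennpow (emeasure lborel E) \<theta> * indicator {0<..1/2} t \<partial>?\<mu>)"
    by (subst nn_integral_cmult_indicator) simp_all
  also have "\<dots> \<le> (\<integral>\<^sup>+ t. indicator {0<..} t * ennpow (emeasure lborel (Ot t f)) \<theta> \<partial>?\<mu>)"
  proof (intro nn_integral_mono)
    fix t
    show "ennpow (emeasure lborel E) \<theta> * indicator {0<..1/2} t \<le> indicator {0<..} t * ennpow (emeasure lborel (Ot t f)) \<theta>"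
    proof (cases "t \<in> {0<..1/2}")
      case True
      then have "E \<subseteq> Ot t f" using above by (force simp: Ot_def)
      then have "emeasure lborel E \<le> emeasure lborel (Ot t f)"
        using sets_Ot[OF f] by (intro emeasure_mono) simp_all
      then show ?thesis using True \<open>0 < \<theta>\<close> by (simp add: ennpow_mono)
    qed simp
  qed
  finally show ?thesis .
qed

lemma volume_le_besov_cap_compact:
  fixes p \<beta> :: real
  defines "n \<equiv> real DIM('a::euclidean_space)"
  assumes p: "1 \<le> p" and \<beta>: "0 < \<beta>" "\<beta> < 1" and \<beta>p: "\<beta> * p < n"
  obtains C where "0 < C"
    "\<And>E :: 'a set. ennpow (emeasure lborel E) ((n - p * \<beta>) / n) \<le> ennreal C * besov_cap_compact p p \<beta> E"
proof -
  obtain C where "0 < C" and lorentz: "\<And>f :: 'a \<Rightarrow> real. f \<in> borel_measurable borel \<Longrightarrow>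
      {x. f x \<noteq> 0} \<in> fmeasurable lborel \<Longrightarrow> bounded (range f) \<Longrightarrow>
      (\<integral>\<^sup>+ t. indicator {0<..} t * ennpow (emeasure lborel (Ot t f)) ((n - p * \<beta>) / n)
         \<partial>interval_measure (\<lambda>t. (max 0 t) powr p)) \<le> ennreal C * gagliardo p \<beta> f"
    using nn_integral_level_measure_le_gagliardo[OF p \<beta>(1) \<beta>p[unfolded n_def]] unfolding n_def by blast
  have "0 < (n - p * \<beta>) / n" unfolding n_def using \<beta>p by (simp add: n_def field_simps)
  show thesis
  proof (rule that)
    show "0 < 2 powr p * C" using \<open>0 < C\<close> by simp
    fix E :: "'a set"
    show "ennpow (emeasure lborel E) ((n - p * \<beta>) / n) \<le> ennreal (2 powr p * C) * besov_cap_compact p p \<beta> E"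
      unfolding besov_cap_compact_def
    proof (rule ennreal_le_mult_INF)
      show "0 < 2 powr p * C" using \<open>0 < C\<close> by simp
      fix f assume "f \<in> {f \<in> C0inf. \<forall>x. indicator E x \<le> f x}"
      then have f: "f \<in> C0inf" and above: "\<forall>x. indicator E x \<le> f x" by auto
      have "1 \<le> f x" if "x \<in> E" for x using spec[OF above, of x] that by simp
      then have "ennpow (emeasure lborel E) ((n - p * \<beta>) / n) * ennreal (2 powr - p)
          \<le> ennreal C * ennpow (besov_norm p p \<beta> f) p"
        using lorentz[OF C0inf_borel_measurable[OF f] C0inf_support_fmeasurable[OF f] C0inf_bounded[OF f]]
          \<open>0 < (n - p * \<beta>) / n\<close> \<beta> p
        by (intro order.trans[OF nn_integral_level_measure_ge_volume[OF C0inf_borel_measurable[OF f]]])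
          (auto simp: besov_norm_eq_gagliardo ennpow_inverse)
      then have "ennpow (emeasure lborel E) ((n - p * \<beta>) / n) * ennreal (2 powr - p) * ennreal (2 powr p)
          \<le> ennreal C * ennpow (besov_norm p p \<beta> f) p * ennreal (2 powr p)"
        by (rule mult_right_mono) simp
      then show "ennpow (emeasure lborel E) ((n - p * \<beta>) / n) \<le> ennreal (2 powr p * C) * ennpow (besov_norm p p \<beta> f) p"
        using \<open>0 < C\<close> by (simp add: mult.assoc ennreal_mult[symmetric] powr_add[symmetric]) (simp add: ennreal_mult ac_simps)
    qed
  qed
qed

lemma lorentz_besov_inequality:
  fixes \<beta> p :: real
  defines "n \<equiv> real DIM('a::euclidean_space)"
  assumes \<beta>: "0 < \<beta>" "\<beta> < 1" and p: "1 \<le> p" and \<beta>p: "\<beta> * p < n"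
  shows "\<exists>C>0. \<forall>f \<in> (C0inf :: ('a \<Rightarrow> real) set).
    ennpow (\<integral>\<^sup>+ t. indicator {0<..} t * ennpow (emeasure lborel (Ot t f)) ((n - p * \<beta>) / n)
      \<partial>(interval_measure (\<lambda>t. (max 0 t) powr p))) (1 / p) \<le> ennreal C * besov_norm p p \<beta> f"
proof -
  have p_pos: "0 < p" using p by simp
  obtain C where "0 < C" and bound: "\<And>f :: 'a \<Rightarrow> real. f \<in> borel_measurable borel \<Longrightarrow>
      {x. f x \<noteq> 0} \<in> fmeasurable lborel \<Longrightarrow> bounded (range f) \<Longrightarrow>
      (\<integral>\<^sup>+ t. indicator {0<..} t * ennpow (emeasure lborel (Ot t f)) ((n - p * \<beta>) / n)
         \<partial>interval_measure (\<lambda>t. (max 0 t) powr p)) \<le> ennreal C * gagliardo p \<beta> f"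
    using nn_integral_level_measure_le_gagliardo[OF p \<beta>(1) \<beta>p[unfolded n_def]] unfolding n_def by blast
  show ?thesis
  proof (intro exI[of _ "C powr (1 / p)"] conjI ballI)
    show "0 < C powr (1 / p)" using \<open>0 < C\<close> by simp
    fix f :: "'a \<Rightarrow> real" assume "f \<in> C0inf"
    then show "ennpow (\<integral>\<^sup>+ t. indicator {0<..} t * ennpow (emeasure lborel (Ot t f)) ((n - p * \<beta>) / n)
        \<partial>(interval_measure (\<lambda>t. (max 0 t) powr p))) (1 / p) \<le> ennreal (C powr (1 / p)) * besov_norm p p \<beta> f"
      using \<beta> p \<open>0 < C\<close> unfolding besov_norm_eq_gagliardo[OF less_imp_le[OF \<beta>(1)] \<beta>(2) p_pos]
      by (intro ennpow_le_mult bound C0inf_borel_measurable C0inf_support_fmeasurable C0inf_bounded) auto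
  qed
qed

lemma sobolev_besov_inequality:
  fixes \<beta> p :: real
  defines "n \<equiv> real DIM('a::euclidean_space)"
  assumes \<beta>: "0 < \<beta>" "\<beta> < 1" and p: "1 \<le> p" and \<beta>p: "\<beta> * p < n"
  shows "\<exists>C>0. \<forall>f \<in> (C0inf :: ('a \<Rightarrow> real) set).
    ennpow (\<integral>\<^sup>+ x. ennreal (\<bar>f x\<bar> powr (n * p / (n - p * \<beta>))) \<partial>lborel) ((n - p * \<beta>) / (n * p))
      \<le> ennreal C * besov_norm p p \<beta> f"
proof -
  have p_pos: "0 < p" using p by simp
  obtain C where "0 < C" and bound: "\<And>f :: 'a \<Rightarrow> real. f \<in> borel_measurable borel \<Longrightarrow>
      {x. f x \<noteq> 0} \<in> fmeasurable lborel \<Longrightarrow> bounded (range f) \<Longrightarrow>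
      (\<integral>\<^sup>+ x. ennreal (\<bar>f x\<bar> powr (n * p / (n - p * \<beta>))) \<partial>lborel)
        \<le> ennreal C * ennpow (gagliardo p \<beta> f) (n / (n - p * \<beta>))"
    using nn_integral_sobolev_le_gagliardo[OF p \<beta>(1) \<beta>p[unfolded n_def]] unfolding n_def by blast
  have "0 < n" unfolding n_def by simp
  then have exponents: "n / (n - p * \<beta>) * ((n - p * \<beta>) / (n * p)) = 1 / p" "0 < (n - p * \<beta>) / (n * p)"
    using \<beta>p p by (simp_all add: field_simps)
  show ?thesis
  proof (intro exI[of _ "C powr ((n - p * \<beta>) / (n * p))"] conjI ballI)
    show "0 < C powr ((n - p * \<beta>) / (n * p))" using \<open>0 < C\<close> by simp
    fix f :: "'a \<Rightarrow> real" assume "f \<in> C0inf"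
    then have "ennpow (\<integral>\<^sup>+ x. ennreal (\<bar>f x\<bar> powr (n * p / (n - p * \<beta>))) \<partial>lborel) ((n - p * \<beta>) / (n * p))
        \<le> ennreal (C powr ((n - p * \<beta>) / (n * p)))
          * ennpow (ennpow (gagliardo p \<beta> f) (n / (n - p * \<beta>))) ((n - p * \<beta>) / (n * p))"
      using \<open>0 < C\<close> exponents
      by (intro ennpow_le_mult bound C0inf_borel_measurable C0inf_support_fmeasurable C0inf_bounded) auto
    then show "ennpow (\<integral>\<^sup>+ x. ennreal (\<bar>f x\<bar> powr (n * p / (n - p * \<beta>))) \<partial>lborel) ((n - p * \<beta>) / (n * p))
        \<le> ennreal (C powr ((n - p * \<beta>) / (n * p))) * besov_norm p p \<beta> f"
      unfolding ennpow_ennpow exponents(1) besov_norm_eq_gagliardo[OF less_imp_le[OF \<beta>(1)] \<beta>(2) p_pos] .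
  qed
qed

lemma hardy_besov_inequality:
  fixes \<beta> p :: real
  defines "n \<equiv> real DIM('a::euclidean_space)"
  assumes \<beta>: "0 < \<beta>" "\<beta> < 1" and p: "1 \<le> p" and \<beta>p: "\<beta> * p < n"
  shows "\<exists>C>0. \<forall>f \<in> (C0inf :: ('a \<Rightarrow> real) set).
    ennpow (\<integral>\<^sup>+ x. ennreal (\<bar>f x\<bar> powr p / norm x powr (p * \<beta>)) \<partial>lborel) (1 / p)
      \<le> ennreal C * besov_norm p p \<beta> f"
proof -
  have p_pos: "0 < p" using p by simp
  obtain C where "0 < C" and bound: "\<And>f :: 'a \<Rightarrow> real. f \<in> borel_measurable borel \<Longrightarrow>
      {x. f x \<noteq> 0} \<in> fmeasurable lborel \<Longrightarrow> bounded (range f) \<Longrightarrow>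
      (\<integral>\<^sup>+ x. ennreal (\<bar>f x\<bar> powr p / norm x powr (p * \<beta>)) \<partial>lborel) \<le> ennreal C * gagliardo p \<beta> f"
    using nn_integral_hardy_le_gagliardo[OF p \<beta>(1) \<beta>p[unfolded n_def]] unfolding n_def by blast
  show ?thesis
  proof (intro exI[of _ "C powr (1 / p)"] conjI ballI)
    show "0 < C powr (1 / p)" using \<open>0 < C\<close> by simp
    fix f :: "'a \<Rightarrow> real" assume "f \<in> C0inf"
    then show "ennpow (\<integral>\<^sup>+ x. ennreal (\<bar>f x\<bar> powr p / norm x powr (p * \<beta>)) \<partial>lborel) (1 / p)
        \<le> ennreal (C powr (1 / p)) * besov_norm p p \<beta> f"
      using \<beta> p \<open>0 < C\<close> unfolding besov_norm_eq_gagliardo[OF less_imp_le[OF \<beta>(1)] \<beta>(2) p_pos]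
      by (intro ennpow_le_mult bound C0inf_borel_measurable C0inf_support_fmeasurable C0inf_bounded) auto
  qed
qed

lemma isocapacitary_besov_inequality:
  fixes \<beta> p :: real
  defines "n \<equiv> real DIM('a::euclidean_space)"
  assumes \<beta>: "0 < \<beta>" "\<beta> < 1" and p: "1 \<le> p" and \<beta>p: "\<beta> * p < n"
  shows "\<exists>C>0. \<forall>D :: 'a set. smooth_bounded_domain D \<longrightarrow>
    ennpow (emeasure lborel D) ((n - p * \<beta>) / n) \<le> ennreal C * besov_cap_compact p p \<beta> (closure D)"
proof -
  obtain C where "0 < C" and bound: "\<And>E :: 'a set.
      ennpow (emeasure lborel E) ((n - p * \<beta>) / n) \<le> ennreal C * besov_cap_compact p p \<beta> E"
    using volume_le_besov_cap_compact[OF p \<beta> \<beta>p[unfolded n_def]] unfolding n_def by blast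
  have "0 < (n - p * \<beta>) / n" using \<beta>p unfolding n_def by (simp add: field_simps)
  have "ennpow (emeasure lborel D) ((n - p * \<beta>) / n) \<le> ennreal C * besov_cap_compact p p \<beta> (closure D)"
    for D :: "'a set"
  proof -
    have "emeasure lborel D \<le> emeasure lborel (closure D)" by (intro emeasure_mono closure_subset) simp
    then have "ennpow (emeasure lborel D) ((n - p * \<beta>) / n) \<le> ennpow (emeasure lborel (closure D)) ((n - p * \<beta>) / n)"
      using \<open>0 < (n - p * \<beta>) / n\<close> by (rule ennpow_mono)
    also have "\<dots> \<le> ennreal C * besov_cap_compact p p \<beta> (closure D)" by (rule bound)
    finally show ?thesis .
  qed
  then show ?thesis using \<open>0 < C\<close> by blast
qed

theorem theorem3p2:
  fixes \<beta> p :: real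
  assumes "0 < \<beta>" "\<beta> < 1" "1 \<le> p" "p < real CARD('n) / \<beta>"
  defines "n \<equiv> real CARD('n)"
  defines "S1 \<equiv> (\<exists>C>0. \<forall>f \<in> (C0inf :: (real^'n \<Rightarrow> real) set).
      ennpow (\<integral>\<^sup>+ t. indicator {0<..} t * ennpow (emeasure lborel (Ot t f)) ((n - p * \<beta>) / n)
                 \<partial>(interval_measure (\<lambda>t. (max 0 t) powr p))) (1 / p)
        \<le> ennreal C * besov_norm p p \<beta> f)"
  defines "S2 \<equiv> (\<exists>C>0. \<forall>f \<in> (C0inf :: (real^'n \<Rightarrow> real) set).
      ennpow (\<integral>\<^sup>+ x. ennreal (\<bar>f x\<bar> powr (n * p / (n - p * \<beta>))) \<partial>lborel) ((n - p * \<beta>) / (n * p))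
        \<le> ennreal C * besov_norm p p \<beta> f)"
  defines "S3 \<equiv> (\<exists>C>0. \<forall>f \<in> (C0inf :: (real^'n \<Rightarrow> real) set).
      ennpow (\<integral>\<^sup>+ x. ennreal (\<bar>f x\<bar> powr p / norm x powr (p * \<beta>)) \<partial>lborel) (1 / p)
        \<le> ennreal C * besov_norm p p \<beta> f)"
  defines "S4 \<equiv> (\<exists>C>0. \<forall>D :: (real^'n) set. smooth_bounded_domain D \<longrightarrow>
      ennpow (emeasure lborel D) ((n - p * \<beta>) / n)
        \<le> ennreal C * besov_cap_compact p p \<beta> (closure D))"
  shows "(S1 \<longleftrightarrow> S2) \<and> (S2 \<longleftrightarrow> S3) \<and> (S3 \<longleftrightarrow> S4) \<and> S1 \<and> S2 \<and> S3 \<and> S4"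
proof -
  have dim: "real DIM(real^'n) = n" unfolding n_def by simp
  have \<beta>p: "\<beta> * p < real DIM(real^'n)"
    using assms(1,4) unfolding dim n_def by (simp add: pos_less_divide_eq mult.commute)
  note hyps = assms(1-3) \<beta>p
  have S1 unfolding S1_def using lorentz_besov_inequality[OF hyps] unfolding dim .
  moreover have S2 unfolding S2_def using sobolev_besov_inequality[OF hyps] unfolding dim .
  moreover have S3 unfolding S3_def using hardy_besov_inequality[OF hyps] .
  moreover have S4 unfolding S4_def using isocapacitary_besov_inequality[OF hyps] unfolding dim .
  ultimately show ?thesis by blast
qed

end
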